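(* Let $A\subseteq\mathbb{N}$ be an essential $\mathcal{CR}$-set in $(\mathbb{N},+)$ and let $l\in\mathbb{N}$. Then the set $$\{(a,b)\in\mathbb{N}\times\mathbb{N}:\ \{a,a+b,a+2b,\ldots,a+lb\}\subseteq A\}$$ is an essential $\mathcal{CR}$-set in $(\mathbb{N}\times\mathbb{N},+)$ (with coordinatewise addition).
   Context: For a commutative semigroup $(S,+)$ and $r,n\in\mathbb{N}$, let $S^{r\times n}$ denote the set of $r\times n$ matrices with entries in $S$; for $M=(M_{ij})\in S^{r\times n}$ and non-empty $\alpha\subseteq\{1,\ldots,r\}$ write $M_{\alpha j}=\sum_{i\in\alpha}M_{ij}$. A subset $A\subseteq S$ is a $\mathcal{CR}$-set if for every $n\in\mathbb{N}$ there exists $r\in\mathbb{N}$ such that for every $M\in S^{r\times n}$ there exist a non-empty $\alpha\subseteq\{1,\ldots,r\}$ and $s\in S$ with $s+M_{\alpha j}\in A$ for all $j\in\{1,\ldots,n\}$. Let $\beta S$ be the Stone–Čech compactification of the discrete semigroup $S$, viewed as the set of ultrafilters on $S$, with the extended operation given by: for $p,q\in\beta S$ and $B\subseteq S$, $B\in p+q$ iff $\{x\in S:-x+B\in q\}\in p$, where $-x+B=\{y\in S:x+y\in B\}$. Let $\beta(\mathcal{CR})=\{p\in\beta S:\text{every member of }p\text{ is a }\mathcal{CR}\text{-set}\}$; this is a closed subsemigroup of $\beta S$. A set $A\subseteq S$ is an essential $\mathcal{CR}$-set if $A\in p$ for some idempotent $p=p+p$ in $\beta(\mathcal{CR})$.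 *)

theory Defs
  imports Main "HOL-Library.Product_Plus"
begin

text \<open>A commutative semigroup is given as a carrier set S (closed under +) inside a type
of class comm_monoid_add; the ambient zero is only used to make finite sums available and
never needs to lie in S.\<close>

definition CR_set :: "'a::comm_monoid_add set \<Rightarrow> 'a set \<Rightarrow> bool" where
  "CR_set S A \<longleftrightarrow> A \<subseteq> S \<and>
     (\<forall>n::nat. n \<ge> 1 \<longrightarrow> (\<exists>r::nat. r \<ge> 1 \<and>
        (\<forall>M :: nat \<Rightarrow> nat \<Rightarrow> 'a. (\<forall>i<r. \<forall>j<n. M i j \<in> S) \<longrightarrow>
           (\<exists>\<alpha>. \<alpha> \<noteq> {} \<and> \<alpha> \<subseteq> {..<r} \<and>
              (\<exists>s\<in>S. \<forall>j<n. s + (\<Sum>i\<in>\<alpha>. M i j) \<in> A)))))"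

definition ultrafilter_on :: "'a set \<Rightarrow> 'a set set \<Rightarrow> bool" where
  "ultrafilter_on S p \<longleftrightarrow>
     (\<forall>B\<in>p. B \<subseteq> S) \<and> S \<in> p \<and> {} \<notin> p \<and>
     (\<forall>B C. B \<in> p \<and> B \<subseteq> C \<and> C \<subseteq> S \<longrightarrow> C \<in> p) \<and>
     (\<forall>B C. B \<in> p \<and> C \<in> p \<longrightarrow> B \<inter> C \<in> p) \<and>
     (\<forall>B. B \<subseteq> S \<longrightarrow> B \<in> p \<or> S - B \<in> p)"

definition uf_plus :: "'a::plus set \<Rightarrow> 'a set set \<Rightarrow> 'a set set \<Rightarrow> 'a set set" where
  "uf_plus S p q = {B. B \<subseteq> S \<and> {x\<in>S. {y\<in>S. x + y \<in> B} \<in> q} \<in> p}"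

definition beta_CR :: "'a::comm_monoid_add set \<Rightarrow> 'a set set set" where
  "beta_CR S = {p. ultrafilter_on S p \<and> (\<forall>B\<in>p. CR_set S B)}"

definition essential_CR :: "'a::comm_monoid_add set \<Rightarrow> 'a set \<Rightarrow> bool" where
  "essential_CR S A \<longleftrightarrow> (\<exists>p\<in>beta_CR S. uf_plus S p p = p \<and> A \<in> p)"

definition posnat :: "nat set" where
  "posnat = {n. n \<ge> 1}"

end

(* Let p be an idempotent of beta(CR) containing A. For B in p, the pairs (a, b) with
   a, a + b, ..., a + l b in B form a CR set in N x N: each column of a matrix over N x N is
   split into the l + 1 columns a + k (b + 1) over N. Because p + p = p, the ultrafilters on
   N x N containing all these sets form a closed subsemigroup of beta(N x N). Its intersection
   with beta(CR) is again closed under + (a translate of a CR set is CR) and it is nonempty,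
   because a CR set is never covered by finitely many non-CR sets; this partition regularity
   follows from the Hales-Jewett theorem. The Ellis-Numakura lemma gives an idempotent in
   this intersection, and it contains the set of pairs for A. *)

theory Submission
  imports Defs "HOL-Library.FuncSet"
begin

section \<open>The Hales-Jewett theorem\<close>

text \<open>Words are extensional functions from I to the letters {..<k}; cline I \<gamma> f t is the point t of
  the combinatorial line with moving coordinates \<gamma>, the other coordinates being those of f.\<close>
definition words :: "nat set \<Rightarrow> nat \<Rightarrow> (nat \<Rightarrow> nat) set" where
  "words I k = I \<rightarrow>\<^sub>E {..<k}"

definition cline :: "nat set \<Rightarrow> nat set \<Rightarrow> (nat \<Rightarrow> nat) \<Rightarrow> nat \<Rightarrow> (nat \<Rightarrow> nat)" where
  "cline I \<gamma> f t = restrict (\<lambda>i. if i \<in> \<gamma> then t else f i) I"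

definition merge :: "nat set \<Rightarrow> nat set \<Rightarrow> (nat \<Rightarrow> nat) \<Rightarrow> (nat \<Rightarrow> nat) \<Rightarrow> (nat \<Rightarrow> nat)" where
  "merge I I1 x y = restrict (\<lambda>i. if i \<in> I1 then x i else y i) I"

definition mono_line :: "nat set \<Rightarrow> nat \<Rightarrow> ((nat \<Rightarrow> nat) \<Rightarrow> nat) \<Rightarrow> bool" where
  "mono_line I k c \<longleftrightarrow> (\<exists>\<gamma> f. \<gamma> \<subseteq> I \<and> \<gamma> \<noteq> {} \<and> f \<in> words I k \<and>
     (\<forall>t<k. c (cline I \<gamma> f t) = c (cline I \<gamma> f 0)))"

text \<open>s combinatorial lines over the alphabet {..k}, each monochromatic except possibly at its
  last point, all with the same last point z (the focus) and with pairwise distinct colours.\<close>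
definition focused :: "nat \<Rightarrow> nat set \<Rightarrow> ((nat \<Rightarrow> nat) \<Rightarrow> nat) \<Rightarrow> nat \<Rightarrow> bool" where
  "focused k I c s \<longleftrightarrow> (\<exists>z\<in>words I (Suc k). \<exists>\<Gamma> F.
     (\<forall>j<s. \<Gamma> j \<subseteq> I \<and> \<Gamma> j \<noteq> {} \<and> F j \<in> words I (Suc k) \<and> cline I (\<Gamma> j) (F j) k = z \<and>
        (\<forall>t<k. c (cline I (\<Gamma> j) (F j) t) = c (cline I (\<Gamma> j) (F j) 0)))
     \<and> inj_on (\<lambda>j. c (cline I (\<Gamma> j) (F j) 0)) {..<s})"

definition hales_jewett :: "nat \<Rightarrow> nat \<Rightarrow> nat \<Rightarrow> bool" where
  "hales_jewett k r N \<longleftrightarrow> (\<forall>I c. finite I \<longrightarrow> card I = N \<longrightarrow>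
     (\<forall>w\<in>words I k. c w < r) \<longrightarrow> mono_line I k c)"

definition focusing :: "nat \<Rightarrow> nat \<Rightarrow> nat \<Rightarrow> nat \<Rightarrow> bool" where
  "focusing k r s n \<longleftrightarrow> (\<forall>I c. finite I \<longrightarrow> card I = n \<longrightarrow>
     (\<forall>w\<in>words I (Suc k). c w < r) \<longrightarrow> mono_line I (Suc k) c \<or> focused k I c s)"

lemma cline_in_words: "f \<in> words I k \<Longrightarrow> t < k \<Longrightarrow> cline I \<gamma> f t \<in> words I k"
  by (auto simp: words_def cline_def)

lemma words_mono: "f \<in> words I k \<Longrightarrow> k \<le> k' \<Longrightarrow> f \<in> words I k'"
  by (auto simp: words_def PiE_def Pi_def)

lemma merge_in_words:
  "I1 \<subseteq> I \<Longrightarrow> x \<in> words I1 k \<Longrightarrow> y \<in> words (I - I1) k \<Longrightarrow> merge I I1 x y \<in> words I k"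
  by (auto simp: words_def merge_def PiE_def Pi_def)

lemma finite_words: "finite I \<Longrightarrow> finite (words I k)"
  by (simp add: words_def finite_PiE)

lemma card_words: "finite I \<Longrightarrow> card (words I k) = k ^ card I"
  by (simp add: words_def card_PiE)

lemma words_nonempty: "k > 0 \<Longrightarrow> words I k \<noteq> {}"
  by (auto simp: words_def PiE_eq_empty_iff)

lemma cline_merge:
  assumes "\<gamma>1 \<subseteq> I1" "\<gamma>2 \<subseteq> I - I1" "I1 \<subseteq> I"
  shows "cline I (\<gamma>1 \<union> \<gamma>2) (merge I I1 g1 g2) t =
    merge I I1 (cline I1 \<gamma>1 g1 t) (cline (I - I1) \<gamma>2 g2 t)"
  using assms by (auto simp: cline_def merge_def fun_eq_iff)

lemma cline_merge_right:
  assumes "\<gamma>2 \<subseteq> I - I1" "I1 \<subseteq> I"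
  shows "cline I \<gamma>2 (merge I I1 x g2) t = merge I I1 x (cline (I - I1) \<gamma>2 g2 t)"
  using assms by (auto simp: cline_def merge_def fun_eq_iff)

lemma mono_lineI_last:
  assumes "\<gamma> \<subseteq> I" "\<gamma> \<noteq> {}" "f \<in> words I (Suc k)"
    and "\<forall>t<k. c (cline I \<gamma> f t) = c (cline I \<gamma> f 0)"
    and "c (cline I \<gamma> f k) = c (cline I \<gamma> f 0)"
  shows "mono_line I (Suc k) c"
proof -
  have "\<forall>t<Suc k. c (cline I \<gamma> f t) = c (cline I \<gamma> f 0)"
    using assms(4,5) by (metis less_Suc_eq)
  then show ?thesis unfolding mono_line_def using assms(1-3) by blast
qed

lemma mono_line_merge_right:
  assumes "I1 \<subseteq> I" "x \<in> words I1 k" "mono_line (I - I1) k (\<lambda>y. c (merge I I1 x y))"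
  shows "mono_line I k c"
proof -
  obtain \<gamma> f where \<gamma>: "\<gamma> \<subseteq> I - I1" "\<gamma> \<noteq> {}" and f: "f \<in> words (I - I1) k"
    and mono: "\<forall>t<k. c (merge I I1 x (cline (I - I1) \<gamma> f t)) = c (merge I I1 x (cline (I - I1) \<gamma> f 0))"
    using assms(3) unfolding mono_line_def by blast
  show ?thesis
    unfolding mono_line_def
  proof (intro exI conjI)
    show "\<gamma> \<subseteq> I" "\<gamma> \<noteq> {}" using \<gamma> by auto
    show "merge I I1 x f \<in> words I k" by (rule merge_in_words[OF assms(1,2) f])
    show "\<forall>t<k. c (cline I \<gamma> (merge I I1 x f) t) = c (cline I \<gamma> (merge I I1 x f) 0)"
      unfolding cline_merge_right[OF \<gamma>(1) assms(1)] by (rule mono)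
  qed
qed

lemma focused_pigeonhole:
  assumes "focused k I c r" and col: "\<forall>w\<in>words I (Suc k). c w < r"
  shows "mono_line I (Suc k) c"
proof -
  obtain z \<Gamma> F where z: "z \<in> words I (Suc k)"
    and L: "\<forall>j<r. \<Gamma> j \<subseteq> I \<and> \<Gamma> j \<noteq> {} \<and> F j \<in> words I (Suc k) \<and> cline I (\<Gamma> j) (F j) k = z \<and>
        (\<forall>t<k. c (cline I (\<Gamma> j) (F j) t) = c (cline I (\<Gamma> j) (F j) 0))"
    and inj: "inj_on (\<lambda>j. c (cline I (\<Gamma> j) (F j) 0)) {..<r}"
    using assms(1) unfolding focused_def by blast
  define g where "g j = c (cline I (\<Gamma> j) (F j) 0)" for j
  have "g ` {..<r} \<subseteq> {..<r}"
  proof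
    fix x assume "x \<in> g ` {..<r}"
    then obtain j where "j < r" "x = g j" by blast
    then show "x \<in> {..<r}"
      using L col cline_in_words[of "F j" I "Suc k" 0 "\<Gamma> j"] unfolding g_def by blast
  qed
  moreover have "card (g ` {..<r}) = r"
    using inj by (simp add: card_image g_def)
  ultimately have "g ` {..<r} = {..<r}"
    by (simp add: card_subset_eq)
  moreover have "c z < r" using col z by blast
  ultimately obtain j where j: "j < r" "c z = g j" by (metis imageE lessThan_iff)
  obtain "\<Gamma> j \<subseteq> I" "\<Gamma> j \<noteq> {}" "F j \<in> words I (Suc k)" "cline I (\<Gamma> j) (F j) k = z"
    and "\<forall>t<k. c (cline I (\<Gamma> j) (F j) t) = c (cline I (\<Gamma> j) (F j) 0)"
    using L[rule_format, OF j(1)] by (elim conjE)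
  then show ?thesis
    using j(2) unfolding g_def by (intro mono_lineI_last) auto
qed

text \<open>Colour a word x over I1 by the whole function y \<mapsto> c (merge x y) on words over I - I1; a
  monochromatic line for this colouring makes c independent of the moving point.\<close>
lemma line_uniform_on_merge:
  assumes HJ: "hales_jewett k (r ^ (Suc k ^ card (I - I1))) (card I1)"
    and I: "finite I" "I1 \<subseteq> I" and col: "\<forall>w\<in>words I (Suc k). c w < r"
  shows "\<exists>\<gamma> g. \<gamma> \<subseteq> I1 \<and> \<gamma> \<noteq> {} \<and> g \<in> words I1 k \<and>
    (\<forall>t<k. \<forall>y\<in>words (I - I1) (Suc k).
       c (merge I I1 (cline I1 \<gamma> g t) y) = c (merge I I1 (cline I1 \<gamma> g 0) y))"
proof -
  define R where "R = r ^ (Suc k ^ card (I - I1))"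
  define \<Phi> where "\<Phi> = words (I - I1) (Suc k) \<rightarrow>\<^sub>E {..<r}"
  have "finite \<Phi>" using I by (simp add: \<Phi>_def finite_PiE finite_words)
  moreover have "card \<Phi> = R"
    using I by (simp add: \<Phi>_def R_def card_PiE finite_words card_words)
  ultimately obtain enc where enc: "bij_betw enc \<Phi> {0..<R}"
    using ex_bij_betw_finite_nat by blast
  define profile where "profile x = restrict (\<lambda>y. c (merge I I1 x y)) (words (I - I1) (Suc k))" for x
  have profile: "profile x \<in> \<Phi>" if "x \<in> words I1 (Suc k)" for x
    using that col merge_in_words[OF I(2)] by (auto simp: \<Phi>_def profile_def)
  have words_Suc: "x \<in> words I1 (Suc k)" if "x \<in> words I1 k" for x
    using that words_mono le_SucI by blast
  have "enc (profile w) < R" if "w \<in> words I1 k" for w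
    using bij_betwE[OF enc] profile[OF words_Suc[OF that]] by simp
  then have "mono_line I1 k (\<lambda>x. enc (profile x))"
    by (intro HJ[folded R_def, unfolded hales_jewett_def, rule_format, OF finite_subset[OF I(2,1)] refl])
  then obtain \<gamma> g where \<gamma>: "\<gamma> \<subseteq> I1" "\<gamma> \<noteq> {}" "g \<in> words I1 k"
    and mono: "\<forall>t<k. enc (profile (cline I1 \<gamma> g t)) = enc (profile (cline I1 \<gamma> g 0))"
    unfolding mono_line_def by blast
  have same_profile: "profile (cline I1 \<gamma> g t) = profile (cline I1 \<gamma> g 0)" if "t < k" for t
  proof (rule inj_onD[OF bij_betw_imp_inj_on[OF enc]])
    show "enc (profile (cline I1 \<gamma> g t)) = enc (profile (cline I1 \<gamma> g 0))"
      using mono that by blast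
    show "profile (cline I1 \<gamma> g t) \<in> \<Phi>" "profile (cline I1 \<gamma> g 0) \<in> \<Phi>"
      using that by (auto intro!: profile words_Suc cline_in_words[OF \<gamma>(3)])
  qed
  have "c (merge I I1 (cline I1 \<gamma> g t) y) = c (merge I I1 (cline I1 \<gamma> g 0) y)"
    if "t < k" "y \<in> words (I - I1) (Suc k)" for t y
    using fun_cong[OF same_profile[OF that(1)], of y] that(2) by (simp add: profile_def)
  with \<gamma> show ?thesis by blast
qed

lemma cline_empty: "f \<in> words I k \<Longrightarrow> cline I {} f t = f"
  by (simp add: cline_def words_def PiE_restrict)

text \<open>A focused family whose focus has a colour not yet used is extended by the constant line at
  the focus (with no moving coordinate).\<close>
lemma focused_add_focus:
  assumes "focused k J c s" "\<not> mono_line J (Suc k) c"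
  obtains z \<Delta> \<Phi> where "z \<in> words J (Suc k)"
    "\<forall>j<Suc s. \<Delta> j \<subseteq> J \<and> \<Phi> j \<in> words J (Suc k) \<and> cline J (\<Delta> j) (\<Phi> j) k = z \<and>
       (\<forall>t<k. c (cline J (\<Delta> j) (\<Phi> j) t) = c (cline J (\<Delta> j) (\<Phi> j) 0))"
    "inj_on (\<lambda>j. c (cline J (\<Delta> j) (\<Phi> j) 0)) {..<Suc s}"
proof -
  obtain z \<Gamma> F where z: "z \<in> words J (Suc k)"
    and L: "\<forall>j<s. \<Gamma> j \<subseteq> J \<and> \<Gamma> j \<noteq> {} \<and> F j \<in> words J (Suc k) \<and> cline J (\<Gamma> j) (F j) k = z \<and>
      (\<forall>t<k. c (cline J (\<Gamma> j) (F j) t) = c (cline J (\<Gamma> j) (F j) 0))"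
    and inj: "inj_on (\<lambda>j. c (cline J (\<Gamma> j) (F j) 0)) {..<s}"
    using assms(1) unfolding focused_def by blast
  have new_colour: "c z \<noteq> c (cline J (\<Gamma> j) (F j) 0)" if "j < s" for j
  proof
    assume same: "c z = c (cline J (\<Gamma> j) (F j) 0)"
    have "mono_line J (Suc k) c"
    proof (rule mono_lineI_last)
      show "\<Gamma> j \<subseteq> J" "\<Gamma> j \<noteq> {}" "F j \<in> words J (Suc k)"
        "\<forall>t<k. c (cline J (\<Gamma> j) (F j) t) = c (cline J (\<Gamma> j) (F j) 0)"
        using L that by blast+
      show "c (cline J (\<Gamma> j) (F j) k) = c (cline J (\<Gamma> j) (F j) 0)"
        using L that same by metis
    qed
    with assms(2) show False ..
  qed
  define \<Delta> where "\<Delta> j = (if j < s then \<Gamma> j else {})" for j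
  define \<Phi> where "\<Phi> j = (if j < s then F j else z)" for j
  have last: "cline J (\<Delta> s) (\<Phi> s) t = z" for t
    using cline_empty[OF z] by (simp add: \<Delta>_def \<Phi>_def)
  show thesis
  proof (rule that)
    show "z \<in> words J (Suc k)" by (rule z)
    show "\<forall>j<Suc s. \<Delta> j \<subseteq> J \<and> \<Phi> j \<in> words J (Suc k) \<and> cline J (\<Delta> j) (\<Phi> j) k = z \<and>
       (\<forall>t<k. c (cline J (\<Delta> j) (\<Phi> j) t) = c (cline J (\<Delta> j) (\<Phi> j) 0))"
    proof (intro allI impI)
      fix j assume "j < Suc s"
      then consider "j < s" | "j = s" by linarith
      then show "\<Delta> j \<subseteq> J \<and> \<Phi> j \<in> words J (Suc k) \<and> cline J (\<Delta> j) (\<Phi> j) k = z \<and>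
         (\<forall>t<k. c (cline J (\<Delta> j) (\<Phi> j) t) = c (cline J (\<Delta> j) (\<Phi> j) 0))"
      proof cases
        case 1
        then have "\<Delta> j = \<Gamma> j" "\<Phi> j = F j" by (simp_all add: \<Delta>_def \<Phi>_def)
        then show ?thesis unfolding \<open>\<Delta> j = \<Gamma> j\<close> \<open>\<Phi> j = F j\<close> using L 1 by blast
      next
        case 2 then show ?thesis using last z by (simp add: \<Delta>_def \<Phi>_def)
      qed
    qed
    have "inj_on (\<lambda>j. c (cline J (\<Delta> j) (\<Phi> j) 0)) {..<s}"
      by (subst inj_on_cong[where g = "\<lambda>j. c (cline J (\<Gamma> j) (F j) 0)"])
        (simp_all add: \<Delta>_def \<Phi>_def inj)
    moreover have "c (cline J (\<Delta> s) (\<Phi> s) 0) \<notin> (\<lambda>j. c (cline J (\<Delta> j) (\<Phi> j) 0)) ` {..<s}"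
      using new_colour by (auto simp: cline_empty[OF z] \<Delta>_def \<Phi>_def)
    ultimately show "inj_on (\<lambda>j. c (cline J (\<Delta> j) (\<Phi> j) 0)) {..<Suc s}"
      by (simp add: lessThan_Suc)
  qed
qed

lemma cline_merge_mono:
  assumes I1: "I1 \<subseteq> I" and "\<gamma> \<subseteq> I1" "\<delta> \<subseteq> I - I1" "F \<in> words (I - I1) (Suc k)"
    and uniform: "\<forall>t<k. \<forall>y\<in>words (I - I1) (Suc k).
       c (merge I I1 (cline I1 \<gamma> g t) y) = c (merge I I1 (cline I1 \<gamma> g 0) y)"
    and mono: "\<forall>t<k. c (merge I I1 (cline I1 \<gamma> g 0) (cline (I - I1) \<delta> F t)) =
       c (merge I I1 (cline I1 \<gamma> g 0) (cline (I - I1) \<delta> F 0))"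
    and "t < k"
  shows "c (cline I (\<gamma> \<union> \<delta>) (merge I I1 g F) t) = c (cline I (\<gamma> \<union> \<delta>) (merge I I1 g F) 0)"
proof -
  have "cline (I - I1) \<delta> F t \<in> words (I - I1) (Suc k)"
    using assms(4,7) by (simp add: cline_in_words)
  then have "c (merge I I1 (cline I1 \<gamma> g t) (cline (I - I1) \<delta> F t)) =
      c (merge I I1 (cline I1 \<gamma> g 0) (cline (I - I1) \<delta> F t))"
    using uniform \<open>t < k\<close> by blast
  also have "\<dots> = c (merge I I1 (cline I1 \<gamma> g 0) (cline (I - I1) \<delta> F 0))"
    using mono \<open>t < k\<close> by blast
  finally show ?thesis unfolding cline_merge[OF assms(2,3) I1] .
qed

text \<open>Glue the line through \<gamma> in the first block to each line of the extended family in the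
  second block.\<close>
lemma focused_Suc:
  assumes I1: "I1 \<subseteq> I" and \<gamma>: "\<gamma> \<subseteq> I1" "\<gamma> \<noteq> {}" "g \<in> words I1 k"
    and uniform: "\<forall>t<k. \<forall>y\<in>words (I - I1) (Suc k).
       c (merge I I1 (cline I1 \<gamma> g t) y) = c (merge I I1 (cline I1 \<gamma> g 0) y)"
    and foc: "focused k (I - I1) (\<lambda>y. c (merge I I1 (cline I1 \<gamma> g 0) y)) s"
    and not_mono: "\<not> mono_line (I - I1) (Suc k) (\<lambda>y. c (merge I I1 (cline I1 \<gamma> g 0) y))"
  shows "focused k I c (Suc s)"
proof -
  obtain z \<Delta> \<Phi> where z: "z \<in> words (I - I1) (Suc k)" and
    L: "\<forall>j<Suc s. \<Delta> j \<subseteq> I - I1 \<and> \<Phi> j \<in> words (I - I1) (Suc k) \<and> cline (I - I1) (\<Delta> j) (\<Phi> j) k = z \<and>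
       (\<forall>t<k. c (merge I I1 (cline I1 \<gamma> g 0) (cline (I - I1) (\<Delta> j) (\<Phi> j) t)) =
              c (merge I I1 (cline I1 \<gamma> g 0) (cline (I - I1) (\<Delta> j) (\<Phi> j) 0)))"
    and inj: "inj_on (\<lambda>j. c (merge I I1 (cline I1 \<gamma> g 0) (cline (I - I1) (\<Delta> j) (\<Phi> j) 0))) {..<Suc s}"
    using focused_add_focus[OF foc not_mono] by blast
  have g: "g \<in> words I1 (Suc k)" using \<gamma>(3) by (rule words_mono) simp
  define \<Gamma>' where "\<Gamma>' j = \<gamma> \<union> \<Delta> j" for j
  define F' where "F' j = merge I I1 g (\<Phi> j)" for j
  have line: "cline I (\<Gamma>' j) (F' j) t = merge I I1 (cline I1 \<gamma> g t) (cline (I - I1) (\<Delta> j) (\<Phi> j) t)"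
    if "j < Suc s" for j t
  proof -
    have "\<Delta> j \<subseteq> I - I1" using L that by blast
    then show ?thesis unfolding \<Gamma>'_def F'_def by (rule cline_merge[OF \<gamma>(1) _ I1])
  qed
  have "\<forall>j<Suc s. \<Gamma>' j \<subseteq> I \<and> \<Gamma>' j \<noteq> {} \<and> F' j \<in> words I (Suc k) \<and>
      cline I (\<Gamma>' j) (F' j) k = merge I I1 (cline I1 \<gamma> g k) z \<and>
      (\<forall>t<k. c (cline I (\<Gamma>' j) (F' j) t) = c (cline I (\<Gamma>' j) (F' j) 0))"
  proof (intro allI impI conjI)
    fix j assume j: "j < Suc s"
    obtain \<Delta>: "\<Delta> j \<subseteq> I - I1" and \<Phi>: "\<Phi> j \<in> words (I - I1) (Suc k)"
      and endpoint: "cline (I - I1) (\<Delta> j) (\<Phi> j) k = z"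
      and mono: "\<forall>t<k. c (merge I I1 (cline I1 \<gamma> g 0) (cline (I - I1) (\<Delta> j) (\<Phi> j) t)) =
              c (merge I I1 (cline I1 \<gamma> g 0) (cline (I - I1) (\<Delta> j) (\<Phi> j) 0))"
      using L[rule_format, OF j] by (elim conjE)
    show "\<Gamma>' j \<subseteq> I" "\<Gamma>' j \<noteq> {}" using \<gamma>(1,2) \<Delta> I1 by (auto simp: \<Gamma>'_def)
    show "F' j \<in> words I (Suc k)" unfolding F'_def by (rule merge_in_words[OF I1 g \<Phi>])
    show "cline I (\<Gamma>' j) (F' j) k = merge I I1 (cline I1 \<gamma> g k) z"
      by (simp only: line[OF j] endpoint)
    fix t assume "t < k"
    show "c (cline I (\<Gamma>' j) (F' j) t) = c (cline I (\<Gamma>' j) (F' j) 0)"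
      unfolding \<Gamma>'_def F'_def by (rule cline_merge_mono[OF I1 \<gamma>(1) \<Delta> \<Phi> uniform mono \<open>t < k\<close>])
  qed
  moreover have "inj_on (\<lambda>j. c (cline I (\<Gamma>' j) (F' j) 0)) {..<Suc s}"
  proof -
    have "inj_on (\<lambda>j. c (cline I (\<Gamma>' j) (F' j) 0)) {..<Suc s} =
        inj_on (\<lambda>j. c (merge I I1 (cline I1 \<gamma> g 0) (cline (I - I1) (\<Delta> j) (\<Phi> j) 0))) {..<Suc s}"
      by (rule inj_on_cong) (simp add: line)
    with inj show ?thesis by simp
  qed
  moreover have "merge I I1 (cline I1 \<gamma> g k) z \<in> words I (Suc k)"
    using merge_in_words[OF I1 cline_in_words[OF g] z] by simp
  ultimately show ?thesis unfolding focused_def by blast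
qed

lemma focusing_step:
  assumes HJ: "\<forall>R. \<exists>N. hales_jewett k R N" and foc: "focusing k r s n"
  shows "\<exists>n'. focusing k r (Suc s) n'"
proof -
  obtain m where HJm: "hales_jewett k (r ^ (Suc k ^ n)) m" using HJ by blast
  have "focusing k r (Suc s) (m + n)"
    unfolding focusing_def
  proof (intro allI impI)
    fix I :: "nat set" and c :: "(nat \<Rightarrow> nat) \<Rightarrow> nat"
    assume I: "finite I" "card I = m + n" and col: "\<forall>w\<in>words I (Suc k). c w < r"
    obtain I1 where I1: "I1 \<subseteq> I" "card I1 = m"
      using obtain_subset_with_card_n[of m I] I(2) by auto
    have card2: "card (I - I1) = n" using I I1 by (simp add: card_Diff_subset finite_subset)
    obtain \<gamma> g where \<gamma>: "\<gamma> \<subseteq> I1" "\<gamma> \<noteq> {}" "g \<in> words I1 k"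
      and uniform: "\<forall>t<k. \<forall>y\<in>words (I - I1) (Suc k).
         c (merge I I1 (cline I1 \<gamma> g t) y) = c (merge I I1 (cline I1 \<gamma> g 0) y)"
      using line_uniform_on_merge[OF _ I(1) I1(1) col] HJm unfolding card2 I1(2) by blast
    define x where "x = cline I1 \<gamma> g 0"
    have x: "x \<in> words I1 (Suc k)"
      unfolding x_def by (rule cline_in_words) (use \<gamma>(3) words_mono in auto)
    have "\<forall>y\<in>words (I - I1) (Suc k). c (merge I I1 x y) < r"
      using col merge_in_words[OF I1(1) x] by blast
    then have focus: "mono_line (I - I1) (Suc k) (\<lambda>y. c (merge I I1 x y)) \<or>
        focused k (I - I1) (\<lambda>y. c (merge I I1 x y)) s"
      using foc[unfolded focusing_def] I(1) card2 by simp
    then show "mono_line I (Suc k) c \<or> focused k I c (Suc s)"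
    proof (cases "mono_line (I - I1) (Suc k) (\<lambda>y. c (merge I I1 x y))")
      case True
      then show ?thesis using mono_line_merge_right[OF I1(1) x] by blast
    next
      case False
      with focus have "focused k (I - I1) (\<lambda>y. c (merge I I1 x y)) s" by blast
      with False show ?thesis using focused_Suc[OF I1(1) \<gamma> uniform] unfolding x_def by blast
    qed
  qed
  then show ?thesis by blast
qed

lemma focusing_exists:
  assumes "\<forall>R. \<exists>N. hales_jewett k R N"
  shows "\<exists>n. focusing k r s n"
proof (induction s)
  case 0
  have "focused k I c 0" for I c
  proof -
    obtain z where "z \<in> words I (Suc k)" using words_nonempty[of "Suc k" I] by blast
    then show ?thesis unfolding focused_def
      by (intro bexI[of _ z] exI[of _ "\<lambda>_. {}"] exI[of _ "\<lambda>_. z"]) simp_all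
  qed
  then have "focusing k r 0 0" unfolding focusing_def by blast
  then show ?case ..
next
  case (Suc s)
  then show ?case using focusing_step[OF assms] by blast
qed

theorem hales_jewett_exists: "\<exists>N. hales_jewett (Suc k) r N"
proof (induction k arbitrary: r)
  case 0
  have "mono_line I (Suc 0) c" if "card I = 1" for I c
  proof -
    obtain i where "I = {i}" using \<open>card I = 1\<close> by (auto simp: card_Suc_eq)
    then show ?thesis unfolding mono_line_def
      by (intro exI[of _ I] exI[of _ "\<lambda>_\<in>I. 0"]) (auto simp: words_def)
  qed
  then have "hales_jewett (Suc 0) r 1" unfolding hales_jewett_def by blast
  then show ?case ..
next
  case (Suc k)
  obtain n where foc: "focusing (Suc k) r r n" using focusing_exists[of "Suc k" r r] Suc by blast
  have "hales_jewett (Suc (Suc k)) r n"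
    unfolding hales_jewett_def
  proof (intro allI impI)
    fix I :: "nat set" and c :: "(nat \<Rightarrow> nat) \<Rightarrow> nat"
    assume "finite I" "card I = n" and col: "\<forall>w\<in>words I (Suc (Suc k)). c w < r"
    then have "mono_line I (Suc (Suc k)) c \<or> focused (Suc k) I c r"
      using foc unfolding focusing_def by blast
    then show "mono_line I (Suc (Suc k)) c" using focused_pigeonhole[OF _ col] by blast
  qed
  then show ?case ..
qed

section \<open>CR sets and their partition regularity\<close>

lemma add_sum_mem_closed:
  assumes cl: "\<forall>x\<in>S. \<forall>y\<in>S. x + y \<in> S" and "s \<in> S" "finite A" "\<forall>a\<in>A. f a \<in> S"
  shows "s + sum f A \<in> (S :: 'a::comm_monoid_add set)"
  using assms(3,4)
proof (induction A rule: finite_induct)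
  case empty then show ?case using \<open>s \<in> S\<close> by simp
next
  case (insert x A)
  then have "(s + sum f A) + f x \<in> S" using cl by simp
  then show ?case using insert(1,2) by (simp add: add_ac)
qed

lemma sum_mem_closed:
  assumes cl: "\<forall>x\<in>S. \<forall>y\<in>S. x + y \<in> S" and "finite A" "a \<in> A" "\<forall>a\<in>A. f a \<in> S"
  shows "sum f A \<in> (S :: 'a::comm_monoid_add set)"
  using add_sum_mem_closed[OF cl, of "f a" "A - {a}" f] assms sum.remove[of A a f] by simp

definition CR_solvable :: "'a::comm_monoid_add set \<Rightarrow> 'a set \<Rightarrow> nat \<Rightarrow> nat \<Rightarrow> (nat \<Rightarrow> nat \<Rightarrow> 'a) \<Rightarrow> bool" where
  "CR_solvable S D r n M \<longleftrightarrow>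
     (\<exists>\<alpha>. \<alpha> \<noteq> {} \<and> \<alpha> \<subseteq> {..<r} \<and> (\<exists>s\<in>S. \<forall>j<n. s + (\<Sum>i\<in>\<alpha>. M i j) \<in> D))"

lemma CR_set_iff:
  "CR_set S D \<longleftrightarrow> D \<subseteq> S \<and>
     (\<forall>n\<ge>1. \<exists>r\<ge>1. \<forall>M. (\<forall>i<r. \<forall>j<n. M i j \<in> S) \<longrightarrow> CR_solvable S D r n M)"
  unfolding CR_set_def CR_solvable_def by (rule refl)

lemma CR_solvable_mono: "CR_solvable S D r n M \<Longrightarrow> D \<subseteq> D' \<Longrightarrow> CR_solvable S D' r n M"
  unfolding CR_solvable_def by blast

lemma CR_set_transfer:
  assumes "CR_set S E" "D \<subseteq> S" and solvable: "\<And>r n M. CR_solvable S E r n M \<Longrightarrow> CR_solvable S D r n M"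
  shows "CR_set S D"
  unfolding CR_set_iff
proof (intro conjI allI impI)
  show "D \<subseteq> S" by (rule assms(2))
  fix n :: nat assume "n \<ge> 1"
  then obtain r where "r \<ge> 1" and r: "\<forall>M. (\<forall>i<r. \<forall>j<n. M i j \<in> S) \<longrightarrow> CR_solvable S E r n M"
    using assms(1) unfolding CR_set_iff by blast
  have "\<forall>M. (\<forall>i<r. \<forall>j<n. M i j \<in> S) \<longrightarrow> CR_solvable S D r n M"
    using solvable r by simp
  with \<open>r \<ge> 1\<close> show "\<exists>r\<ge>1. \<forall>M. (\<forall>i<r. \<forall>j<n. M i j \<in> S) \<longrightarrow> CR_solvable S D r n M"
    by blast
qed

lemma CR_set_mono:
  assumes "CR_set S D" "D \<subseteq> D'" "D' \<subseteq> S"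
  shows "CR_set S D'"
  using assms(1,3) by (rule CR_set_transfer) (rule CR_solvable_mono[OF _ assms(2)])

lemma CR_set_translate:
  assumes cl: "\<forall>x\<in>S. \<forall>y\<in>S. x + y \<in> S"
    and "a \<in> S" "CR_set S E" "D \<subseteq> S" and translate: "\<forall>b\<in>E. a + b \<in> D"
  shows "CR_set S D"
  using assms(3,4)
proof (rule CR_set_transfer)
  fix r n M assume "CR_solvable S E r n M"
  then obtain \<alpha> s where "\<alpha> \<noteq> {}" "\<alpha> \<subseteq> {..<r}" "s \<in> S" and sol: "\<forall>j<n. s + (\<Sum>i\<in>\<alpha>. M i j) \<in> E"
    unfolding CR_solvable_def by blast
  moreover have "a + s \<in> S" using cl \<open>a \<in> S\<close> \<open>s \<in> S\<close> by blast
  moreover have "\<forall>j<n. (a + s) + (\<Sum>i\<in>\<alpha>. M i j) \<in> D"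
    using sol translate by (simp add: add.assoc)
  ultimately show "CR_solvable S D r n M" unfolding CR_solvable_def by blast
qed

lemma not_CR_set_empty:
  assumes "S \<noteq> {}"
  shows "\<not> CR_set S {}"
proof
  assume "CR_set S {}"
  then obtain r where r: "\<forall>M. (\<forall>i<r. \<forall>j<1. M i j \<in> S) \<longrightarrow> CR_solvable S {} r 1 M"
    unfolding CR_set_iff by (meson order_refl)
  obtain x where "x \<in> S" using assms by blast
  then have "CR_solvable S {} r 1 (\<lambda>_ _. x)" using spec[OF r, of "\<lambda>_ _. x"] by simp
  then show False by (auto simp: CR_solvable_def)
qed

lemma not_CR_setD:
  assumes "D \<subseteq> S" "\<not> CR_set S D"
  obtains n where "n \<ge> 1"
    "\<And>r. r \<ge> 1 \<Longrightarrow> \<exists>M. (\<forall>i<r. \<forall>j<n. M i j \<in> S) \<and> \<not> CR_solvable S D r n M"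
proof -
  obtain n where n: "n \<ge> 1"
    and bad: "\<not> (\<exists>r\<ge>1. \<forall>M. (\<forall>i<r. \<forall>j<n. M i j \<in> S) \<longrightarrow> CR_solvable S D r n M)"
    using assms unfolding CR_set_iff by blast
  show thesis
  proof (rule that[OF n])
    fix r :: nat assume "r \<ge> 1"
    with bad show "\<exists>M. (\<forall>i<r. \<forall>j<n. M i j \<in> S) \<and> \<not> CR_solvable S D r n M" by blast
  qed
qed

lemma not_CR_solvable_embed:
  assumes cl: "\<forall>x\<in>S. \<forall>y\<in>S. x + y \<in> S" and not_sol: "\<not> CR_solvable S D r n G'"
    and K: "\<forall>i<r. K i \<in> S"
    and e: "\<forall>j<n. e j < m \<and> (\<forall>i<r. G i (e j) = G' i j + K i)"
  shows "\<not> CR_solvable S D r m G"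
proof
  assume "CR_solvable S D r m G"
  then obtain \<alpha> s where \<alpha>: "\<alpha> \<noteq> {}" "\<alpha> \<subseteq> {..<r}" and "s \<in> S"
    and sol: "\<forall>v<m. s + (\<Sum>i\<in>\<alpha>. G i v) \<in> D"
    unfolding CR_solvable_def by blast
  have "finite \<alpha>" using \<alpha>(2) finite_subset by blast
  then have "s + (\<Sum>i\<in>\<alpha>. K i) \<in> S"
    using add_sum_mem_closed[OF cl \<open>s \<in> S\<close>] K \<alpha>(2) by blast
  moreover have "(s + (\<Sum>i\<in>\<alpha>. K i)) + (\<Sum>i\<in>\<alpha>. G' i j) \<in> D" if "j < n" for j
  proof -
    have "(\<Sum>i\<in>\<alpha>. G i (e j)) = (\<Sum>i\<in>\<alpha>. G' i j + K i)"
      using e that \<alpha>(2) by (intro sum.cong) auto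
    also have "\<dots> = (\<Sum>i\<in>\<alpha>. G' i j) + (\<Sum>i\<in>\<alpha>. K i)" by (rule sum.distrib)
    finally have "s + ((\<Sum>i\<in>\<alpha>. G' i j) + (\<Sum>i\<in>\<alpha>. K i)) \<in> D" using sol e that by metis
    then show ?thesis by (simp add: add_ac)
  qed
  ultimately have "CR_solvable S D r n G'" using \<alpha> unfolding CR_solvable_def by blast
  with not_sol show False ..
qed

text \<open>Two counterexample matrices combine into one whose columns are indexed by pairs of
  columns, encoded as v = v mod n1 + n1 * (v div n1).\<close>
lemma not_CR_solvable_product:
  assumes cl: "\<forall>x\<in>S. \<forall>y\<in>S. x + y \<in> S" and "n1 \<ge> 1" "n2 \<ge> 1"
    and G1: "\<forall>i<r. \<forall>j<n1. G1 i j \<in> S" "\<not> CR_solvable S D1 r n1 G1"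
    and G2: "\<forall>i<r. \<forall>j<n2. G2 i j \<in> S" "\<not> CR_solvable S D2 r n2 G2"
  shows "\<exists>G. (\<forall>i<r. \<forall>v<n1 * n2. G i v \<in> S) \<and>
    \<not> CR_solvable S D1 r (n1 * n2) G \<and> \<not> CR_solvable S D2 r (n1 * n2) G"
proof -
  define G where "G i v = G1 i (v mod n1) + G2 i (v div n1)" for i v
  have "n1 > 0" "n2 > 0" using assms(2,3) by auto
  have "\<forall>i<r. \<forall>v<n1 * n2. G i v \<in> S"
  proof (intro allI impI)
    fix i v assume "i < r" "v < n1 * n2"
    moreover have "v mod n1 < n1" "v div n1 < n2"
      using \<open>v < n1 * n2\<close> \<open>n1 > 0\<close> by (simp_all add: less_mult_imp_div_less mult.commute)
    ultimately show "G i v \<in> S" using G1(1) G2(1) cl by (simp add: G_def)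
  qed
  moreover have "j < n1 * n2" if "j < n1" for j
    using that mult_le_mono2[of 1 n2 n1] assms(3) by linarith
  then have "\<not> CR_solvable S D1 r (n1 * n2) G"
    using not_CR_solvable_embed[OF cl G1(2), of "\<lambda>i. G2 i 0" "\<lambda>j. j"] G2(1) \<open>n2 > 0\<close>
    by (simp add: G_def)
  moreover have "n1 * j < n1 * n2" if "j < n2" for j
    using that \<open>n1 > 0\<close> by simp
  then have "\<not> CR_solvable S D2 r (n1 * n2) G"
    using not_CR_solvable_embed[OF cl G2(2), of "\<lambda>i. G1 i 0" "\<lambda>j. n1 * j"] G1(1) \<open>n1 > 0\<close>
    by (simp add: G_def add.commute)
  ultimately show ?thesis by blast
qed

lemma CR_set_finite_columns:
  assumes "CR_set S D" "finite W" "W \<noteq> {}"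
  shows "\<exists>r\<ge>1. \<forall>M :: nat \<Rightarrow> 'b \<Rightarrow> 'a::comm_monoid_add. (\<forall>i<r. \<forall>w\<in>W. M i w \<in> S) \<longrightarrow>
       (\<exists>\<alpha>. \<alpha> \<noteq> {} \<and> \<alpha> \<subseteq> {..<r} \<and> (\<exists>s\<in>S. \<forall>w\<in>W. s + (\<Sum>i\<in>\<alpha>. M i w) \<in> D))"
proof -
  obtain \<omega> where \<omega>: "bij_betw \<omega> {0..<card W} W"
    using ex_bij_betw_nat_finite[OF assms(2)] by blast
  have "card W \<ge> 1" using assms(2,3) by (simp add: Suc_le_eq card_gt_0_iff)
  then obtain r where "r \<ge> 1"
    and r: "\<forall>M. (\<forall>i<r. \<forall>j<card W. M i j \<in> S) \<longrightarrow> CR_solvable S D r (card W) M"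
    using assms(1) unfolding CR_set_iff by blast
  have "\<exists>\<alpha>. \<alpha> \<noteq> {} \<and> \<alpha> \<subseteq> {..<r} \<and> (\<exists>s\<in>S. \<forall>w\<in>W. s + (\<Sum>i\<in>\<alpha>. M i w) \<in> D)"
    if M: "\<forall>i<r. \<forall>w\<in>W. M i w \<in> S" for M :: "nat \<Rightarrow> 'b \<Rightarrow> 'a"
  proof -
    have "\<forall>i<r. \<forall>j<card W. M i (\<omega> j) \<in> S" using M bij_betwE[OF \<omega>] by simp
    then have "CR_solvable S D r (card W) (\<lambda>i j. M i (\<omega> j))"
      using spec[OF r, of "\<lambda>i j. M i (\<omega> j)"] by blast
    then obtain \<alpha> s where \<alpha>: "\<alpha> \<noteq> {}" "\<alpha> \<subseteq> {..<r}" and "s \<in> S"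
      and sol: "\<forall>j<card W. s + (\<Sum>i\<in>\<alpha>. M i (\<omega> j)) \<in> D"
      unfolding CR_solvable_def by blast
    have "\<forall>w\<in>W. s + (\<Sum>i\<in>\<alpha>. M i w) \<in> D"
    proof
      fix w assume "w \<in> W"
      then have "w \<in> \<omega> ` {0..<card W}" using bij_betw_imp_surj_on[OF \<omega>] by simp
      then obtain j where "j < card W" "w = \<omega> j" by auto
      then show "s + (\<Sum>i\<in>\<alpha>. M i w) \<in> D" using sol by blast
    qed
    then show "\<exists>\<alpha>. \<alpha> \<noteq> {} \<and> \<alpha> \<subseteq> {..<r} \<and> (\<exists>s\<in>S. \<forall>w\<in>W. s + (\<Sum>i\<in>\<alpha>. M i w) \<in> D)"
      using \<alpha> \<open>s \<in> S\<close> by blast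
  qed
  with \<open>r \<ge> 1\<close> show ?thesis by blast
qed

lemma inj_on_add_mult: "inj_on (\<lambda>(i, k). i + r * k) ({..<r} \<times> (UNIV :: nat set))"
proof (rule inj_onI, clarsimp)
  fix i k i' k' :: nat
  assume "i < r" "i' < r" and eq: "i + r * k = i' + r * k'"
  then have "i = i'" by (metis mod_mult_self2 mod_less)
  with eq \<open>i < r\<close> show "i = i' \<and> k = k'" by simp
qed

lemma add_mult_less:
  assumes "i < r" "k < N"
  shows "i + r * k < r * (N :: nat)"
proof -
  have "i + r * k < r * Suc k" using assms(1) by simp
  also have "\<dots> \<le> r * N" using assms(2) by (intro mult_le_mono2) simp
  finally show ?thesis .
qed

lemma sum_rows_cline:
  fixes G :: "nat \<Rightarrow> nat \<Rightarrow> 'a::comm_monoid_add"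
  assumes "\<alpha> \<subseteq> {..<r}" "\<gamma> \<subseteq> {..<N}"
  shows "(\<Sum>i\<in>\<alpha>. \<Sum>k<N. G (i + r * k) (cline {..<N} \<gamma> f t k)) =
    (\<Sum>(i, k)\<in>\<alpha> \<times> ({..<N} - \<gamma>). G (i + r * k) (f k)) +
    (\<Sum>b\<in>(\<lambda>(i, k). i + r * k) ` (\<alpha> \<times> \<gamma>). G b t)"
proof -
  have fin: "finite \<alpha>" "finite \<gamma>" using assms finite_subset by auto
  have "(\<Sum>k<N. G (i + r * k) (cline {..<N} \<gamma> f t k)) =
      (\<Sum>k\<in>{..<N} - \<gamma>. G (i + r * k) (f k)) + (\<Sum>k\<in>\<gamma>. G (i + r * k) t)" for i
  proof -
    have "(\<Sum>k<N. G (i + r * k) (cline {..<N} \<gamma> f t k)) =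
        (\<Sum>k\<in>{..<N} - \<gamma>. G (i + r * k) (cline {..<N} \<gamma> f t k)) + (\<Sum>k\<in>\<gamma>. G (i + r * k) (cline {..<N} \<gamma> f t k))"
      using sum.subset_diff[OF assms(2)] by simp
    also have "\<dots> = (\<Sum>k\<in>{..<N} - \<gamma>. G (i + r * k) (f k)) + (\<Sum>k\<in>\<gamma>. G (i + r * k) t)"
      using assms(2) by (auto simp: cline_def intro!: sum.cong arg_cong2[where f="(+)"])
    finally show ?thesis .
  qed
  moreover have "inj_on (\<lambda>(i, k). i + r * k) (\<alpha> \<times> \<gamma>)"
    using inj_on_add_mult by (rule inj_on_subset) (use assms(1) in auto)
  then have "(\<Sum>b\<in>(\<lambda>(i, k). i + r * k) ` (\<alpha> \<times> \<gamma>). G b t) = (\<Sum>(i, k)\<in>\<alpha> \<times> \<gamma>. G (i + r * k) t)"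
    by (simp add: sum.reindex split_def)
  ultimately show ?thesis
    using fin by (simp add: sum.distrib sum.cartesian_product)
qed

lemma CR_solvable_of_cline:
  assumes cl: "\<forall>x\<in>S. \<forall>y\<in>S. x + y \<in> S" and GS: "\<forall>i<r * N. \<forall>v<m. G i v \<in> S"
    and \<alpha>: "\<alpha> \<noteq> {}" "\<alpha> \<subseteq> {..<r}" and "s \<in> S"
    and \<gamma>: "\<gamma> \<noteq> {}" "\<gamma> \<subseteq> {..<N}" and f: "f \<in> words {..<N} m"
    and sol: "\<forall>t<m. s + (\<Sum>i\<in>\<alpha>. \<Sum>k<N. G (i + r * k) (cline {..<N} \<gamma> f t k)) \<in> D"
  shows "CR_solvable S D (r * N) m G"
proof -
  define C where "C = (\<Sum>(i, k)\<in>\<alpha> \<times> ({..<N} - \<gamma>). G (i + r * k) (f k))"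
  define \<beta> where "\<beta> = (\<lambda>(i, k). i + r * k) ` (\<alpha> \<times> \<gamma>)"
  have "\<forall>t<m. (s + C) + (\<Sum>b\<in>\<beta>. G b t) \<in> D"
    using sol unfolding sum_rows_cline[OF \<alpha>(2) \<gamma>(2)] C_def \<beta>_def by (simp add: add.assoc)
  moreover have "s + C \<in> S" unfolding C_def
  proof (rule add_sum_mem_closed[OF cl \<open>s \<in> S\<close>])
    show "finite (\<alpha> \<times> ({..<N} - \<gamma>))" using \<alpha>(2) finite_subset by blast
    show "\<forall>p\<in>\<alpha> \<times> ({..<N} - \<gamma>). (case p of (i, k) \<Rightarrow> G (i + r * k) (f k)) \<in> S"
      using \<alpha>(2) f GS add_mult_less by (auto simp: words_def PiE_iff)
  qed
  moreover have "\<beta> \<noteq> {}" using \<alpha>(1) \<gamma>(1) by (simp add: \<beta>_def)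
  moreover have "\<beta> \<subseteq> {..<r * N}"
    using \<alpha>(2) \<gamma>(2) by (auto simp: \<beta>_def intro!: add_mult_less)
  ultimately show ?thesis unfolding CR_solvable_def by blast
qed

lemma hales_jewett_pos:
  assumes "hales_jewett k r N" "0 < r"
  shows "0 < N"
proof (rule ccontr)
  assume "\<not> 0 < N"
  then have "mono_line {} k (\<lambda>_. 0)"
    using assms unfolding hales_jewett_def by simp
  then show False unfolding mono_line_def by blast
qed

lemma not_CR_set_common_counterexample:
  assumes cl: "\<forall>x\<in>S. \<forall>y\<in>S. x + y \<in> S"
    and D1: "D1 \<subseteq> S" "\<not> CR_set S D1" and D2: "D2 \<subseteq> S" "\<not> CR_set S D2"
  obtains m where "m \<ge> 1" "\<And>R. R \<ge> 1 \<Longrightarrow> \<exists>G. (\<forall>i<R. \<forall>v<m. G i v \<in> S) \<and>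
    \<not> CR_solvable S D1 R m G \<and> \<not> CR_solvable S D2 R m G"
proof -
  obtain n1 where "n1 \<ge> 1"
    and bad1: "\<And>R. R \<ge> 1 \<Longrightarrow> \<exists>G. (\<forall>i<R. \<forall>j<n1. G i j \<in> S) \<and> \<not> CR_solvable S D1 R n1 G"
    using not_CR_setD[OF D1] by blast
  obtain n2 where "n2 \<ge> 1"
    and bad2: "\<And>R. R \<ge> 1 \<Longrightarrow> \<exists>G. (\<forall>i<R. \<forall>j<n2. G i j \<in> S) \<and> \<not> CR_solvable S D2 R n2 G"
    using not_CR_setD[OF D2] by blast
  show thesis
  proof (rule that)
    show "n1 * n2 \<ge> 1" using \<open>n1 \<ge> 1\<close> \<open>n2 \<ge> 1\<close> by simp
    fix R :: nat assume "R \<ge> 1"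
    obtain G1 where G1: "\<forall>i<R. \<forall>j<n1. G1 i j \<in> S" "\<not> CR_solvable S D1 R n1 G1"
      using bad1[OF \<open>R \<ge> 1\<close>] by blast
    obtain G2 where G2: "\<forall>i<R. \<forall>j<n2. G2 i j \<in> S" "\<not> CR_solvable S D2 R n2 G2"
      using bad2[OF \<open>R \<ge> 1\<close>] by blast
    show "\<exists>G. (\<forall>i<R. \<forall>v<n1 * n2. G i v \<in> S) \<and>
        \<not> CR_solvable S D1 R (n1 * n2) G \<and> \<not> CR_solvable S D2 R (n1 * n2) G"
      by (rule not_CR_solvable_product[OF cl \<open>n1 \<ge> 1\<close> \<open>n2 \<ge> 1\<close> G1 G2])
  qed
qed

text \<open>Given one counterexample matrix G for D1 and D2 with m columns, build
  the matrix whose columns are the words w of length N over {..<m} and whose i-th row sums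
  G (i + r * k) (w k) over the coordinates k. A solution of D1 \<union> D2 colours the words; by
  Hales--Jewett some combinatorial line is monochromatic, and along it the solution becomes a
  solution for G of the corresponding D.\<close>
lemma not_CR_set_Un:
  assumes cl: "\<forall>x\<in>S. \<forall>y\<in>S. x + y \<in> S"
    and D1: "D1 \<subseteq> S" "\<not> CR_set S D1" and D2: "D2 \<subseteq> S" "\<not> CR_set S D2"
  shows "\<not> CR_set S (D1 \<union> D2)"
proof
  assume CR: "CR_set S (D1 \<union> D2)"
  obtain m where "m \<ge> 1" and bad: "\<And>R. R \<ge> 1 \<Longrightarrow> \<exists>G. (\<forall>i<R. \<forall>v<m. G i v \<in> S) \<and>
      \<not> CR_solvable S D1 R m G \<and> \<not> CR_solvable S D2 R m G"
    using not_CR_set_common_counterexample[OF cl D1 D2] by blast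
  have "Suc (m - 1) = m" using \<open>m \<ge> 1\<close> by simp
  then obtain N where HJ: "hales_jewett m 2 N"
    using hales_jewett_exists[of "m - 1" 2] by auto
  have "N \<ge> 1" using hales_jewett_pos[OF HJ] by simp
  define W where "W = words {..<N} m"
  have "finite W" "W \<noteq> {}" using \<open>m \<ge> 1\<close> by (simp_all add: W_def finite_words words_nonempty)
  obtain r where "r \<ge> 1" and solve: "\<forall>M :: nat \<Rightarrow> (nat \<Rightarrow> nat) \<Rightarrow> 'a. (\<forall>i<r. \<forall>w\<in>W. M i w \<in> S) \<longrightarrow>
      (\<exists>\<alpha>. \<alpha> \<noteq> {} \<and> \<alpha> \<subseteq> {..<r} \<and> (\<exists>s\<in>S. \<forall>w\<in>W. s + (\<Sum>i\<in>\<alpha>. M i w) \<in> D1 \<union> D2))"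
    using CR_set_finite_columns[OF CR \<open>finite W\<close> \<open>W \<noteq> {}\<close>] by blast
  have "r * N \<ge> 1" using \<open>r \<ge> 1\<close> \<open>N \<ge> 1\<close> by simp
  then obtain G where GS: "\<forall>i<r * N. \<forall>v<m. G i v \<in> S"
    and not_sol: "\<not> CR_solvable S D1 (r * N) m G" "\<not> CR_solvable S D2 (r * N) m G"
    using bad by blast
  define H where "H i w = (\<Sum>k<N. G (i + r * k) (w k))" for i w
  have HS: "\<forall>i<r. \<forall>w\<in>W. H i w \<in> S"
  proof (intro allI impI ballI)
    fix i w assume "i < r" "w \<in> W"
    then have "\<forall>k\<in>{..<N}. G (i + r * k) (w k) \<in> S"
      using GS add_mult_less[OF \<open>i < r\<close>] by (auto simp: W_def words_def PiE_iff)
    then show "H i w \<in> S"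
      unfolding H_def using sum_mem_closed[OF cl, of "{..<N}" 0] \<open>N \<ge> 1\<close> by simp
  qed
  obtain \<alpha> s where \<alpha>: "\<alpha> \<noteq> {}" "\<alpha> \<subseteq> {..<r}" and "s \<in> S"
    and sol: "\<forall>w\<in>W. s + (\<Sum>i\<in>\<alpha>. H i w) \<in> D1 \<union> D2"
    using mp[OF spec[OF solve, of H] HS] by blast
  define c where "c w = (if s + (\<Sum>i\<in>\<alpha>. H i w) \<in> D1 then 0 else 1 :: nat)" for w
  have "mono_line {..<N} m c"
    by (rule HJ[unfolded hales_jewett_def, rule_format]) (simp_all add: c_def)
  then obtain \<gamma> f where \<gamma>: "\<gamma> \<subseteq> {..<N}" "\<gamma> \<noteq> {}" and "f \<in> W"
    and mono: "\<forall>t<m. c (cline {..<N} \<gamma> f t) = c (cline {..<N} \<gamma> f 0)"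
    unfolding mono_line_def W_def by blast
  define D where "D = (if c (cline {..<N} \<gamma> f 0) = 0 then D1 else D2)"
  have "s + (\<Sum>i\<in>\<alpha>. H i (cline {..<N} \<gamma> f t)) \<in> D" if "t < m" for t
  proof -
    have "cline {..<N} \<gamma> f t \<in> W" using cline_in_words \<open>f \<in> W\<close> that by (simp add: W_def)
    then have "s + (\<Sum>i\<in>\<alpha>. H i (cline {..<N} \<gamma> f t)) \<in> D1 \<union> D2" using sol by blast
    moreover have "c (cline {..<N} \<gamma> f t) = c (cline {..<N} \<gamma> f 0)" using mono that by blast
    ultimately show ?thesis by (simp add: D_def c_def split: if_splits)
  qed
  then have "CR_solvable S D (r * N) m G"
    using CR_solvable_of_cline[OF cl GS \<alpha> \<open>s \<in> S\<close> \<gamma>(2,1)] \<open>f \<in> W\<close> unfolding H_def W_def by blast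
  then show False using not_sol by (simp add: D_def split: if_splits)
qed

section \<open>Ultrafilters and the extended operation\<close>

definition fip :: "'a set \<Rightarrow> 'a set set \<Rightarrow> bool" where
  "fip S K \<longleftrightarrow> (\<forall>G. finite G \<and> G \<subseteq> K \<longrightarrow> S \<inter> \<Inter>G \<noteq> {})"

lemma fip_insert:
  assumes "\<And>G. finite G \<Longrightarrow> G \<subseteq> F \<Longrightarrow> S \<inter> \<Inter>G \<inter> X \<noteq> {}"
  shows "fip S (insert X F)"
  unfolding fip_def
proof (intro allI impI)
  fix G assume "finite G \<and> G \<subseteq> insert X F"
  then have "S \<inter> \<Inter>(G - {X}) \<inter> X \<noteq> {}" by (intro assms) auto
  then show "S \<inter> \<Inter>G \<noteq> {}" by blast
qed

lemma fip_chain_Union: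
  assumes "\<C> \<noteq> {}" "subset.chain A \<C>" "\<And>F. F \<in> \<C> \<Longrightarrow> fip S F"
  shows "fip S (\<Union>\<C>)"
  unfolding fip_def
proof (intro allI impI)
  fix G assume G: "finite G \<and> G \<subseteq> \<Union>\<C>"
  then obtain F where "F \<in> \<C>" "G \<subseteq> F"
    using finite_subset_Union_chain[of G \<C> A] assms(1,2) by blast
  then show "S \<inter> \<Inter>G \<noteq> {}" using assms(3) G unfolding fip_def by blast
qed

lemma maximal_fip_ultrafilter:
  assumes MS: "M \<subseteq> Pow S" and fipM: "fip S M"
    and maximal: "\<And>X. X \<subseteq> S \<Longrightarrow> fip S (insert X M) \<Longrightarrow> X \<in> M"
  shows "ultrafilter_on S M"
proof -
  have meet: "S \<inter> \<Inter>G \<noteq> {}" if "finite G" "G \<subseteq> M" for G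
    using fipM that unfolding fip_def by blast
  show ?thesis
    unfolding ultrafilter_on_def
  proof (intro conjI allI impI ballI)
    show "B \<subseteq> S" if "B \<in> M" for B using MS that by blast
    show "{} \<notin> M" using meet[of "{{}}"] by auto
    show "S \<in> M"
    proof (rule maximal)
      show "fip S (insert S M)"
      proof (rule fip_insert)
        fix G assume "finite G" "G \<subseteq> M"
        then show "S \<inter> \<Inter>G \<inter> S \<noteq> {}" using meet by blast
      qed
    qed simp
  next
    fix B C assume BC: "B \<in> M \<and> B \<subseteq> C \<and> C \<subseteq> S"
    show "C \<in> M"
    proof (rule maximal)
      show "fip S (insert C M)"
      proof (rule fip_insert)
        fix G assume "finite G" "G \<subseteq> M"
        then have "S \<inter> \<Inter>(insert B G) \<noteq> {}" using BC by (intro meet) auto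
        moreover have "S \<inter> \<Inter>(insert B G) \<subseteq> S \<inter> \<Inter>G \<inter> C" using BC by auto
        ultimately show "S \<inter> \<Inter>G \<inter> C \<noteq> {}" by blast
      qed
    qed (use BC in blast)
  next
    fix B C assume BC: "B \<in> M \<and> C \<in> M"
    show "B \<inter> C \<in> M"
    proof (rule maximal)
      show "fip S (insert (B \<inter> C) M)"
      proof (rule fip_insert)
        fix G assume "finite G" "G \<subseteq> M"
        then have "S \<inter> \<Inter>(insert B (insert C G)) \<noteq> {}" using BC by (intro meet) auto
        then show "S \<inter> \<Inter>G \<inter> (B \<inter> C) \<noteq> {}" by auto
      qed
    qed (use BC MS in blast)
  next
    fix B assume B: "B \<subseteq> S"
    show "B \<in> M \<or> S - B \<in> M"
    proof (rule ccontr)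
      assume "\<not> (B \<in> M \<or> S - B \<in> M)"
      then have "\<not> fip S (insert B M)" "\<not> fip S (insert (S - B) M)"
        using maximal[OF B] maximal[of "S - B"] by blast+
      then obtain G1 G2 where G1: "finite G1" "G1 \<subseteq> M" "S \<inter> \<Inter>G1 \<inter> B = {}"
        and G2: "finite G2" "G2 \<subseteq> M" "S \<inter> \<Inter>G2 \<inter> (S - B) = {}"
        by (meson fip_insert)
      have "S \<inter> \<Inter>(G1 \<union> G2) \<noteq> {}" using G1 G2 by (intro meet) auto
      moreover have "S \<inter> \<Inter>(G1 \<union> G2) = {}" using G1(3) G2(3) by auto
      ultimately show False by simp
    qed
  qed
qed

lemma ultrafilter_exists:
  assumes "K \<subseteq> Pow S" "fip S K"
  obtains u where "ultrafilter_on S u" "K \<subseteq> u"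
proof -
  define \<A> where "\<A> = {F. K \<subseteq> F \<and> F \<subseteq> Pow S \<and> fip S F}"
  have "\<exists>M\<in>\<A>. \<forall>X\<in>\<A>. M \<subseteq> X \<longrightarrow> X = M"
  proof (rule subset_Zorn_nonempty)
    show "\<A> \<noteq> {}" using assms unfolding \<A>_def by blast
    fix \<C> assume "\<C> \<noteq> {}" and chain: "subset.chain \<A> \<C>"
    then obtain F where "F \<in> \<C>" by blast
    have "\<C> \<subseteq> \<A>" using chain by (simp add: subset_chain_def)
    show "\<Union>\<C> \<in> \<A>"
      unfolding \<A>_def
    proof (intro CollectI conjI)
      show "K \<subseteq> \<Union>\<C>" using \<open>F \<in> \<C>\<close> \<open>\<C> \<subseteq> \<A>\<close> unfolding \<A>_def by blast
      show "\<Union>\<C> \<subseteq> Pow S" using \<open>\<C> \<subseteq> \<A>\<close> unfolding \<A>_def by blast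
      show "fip S (\<Union>\<C>)"
        using fip_chain_Union[OF \<open>\<C> \<noteq> {}\<close> chain] \<open>\<C> \<subseteq> \<A>\<close> unfolding \<A>_def by blast
    qed
  qed
  then obtain M where "M \<in> \<A>" and max: "\<forall>X\<in>\<A>. M \<subseteq> X \<longrightarrow> X = M" by blast
  then have M: "K \<subseteq> M" "M \<subseteq> Pow S" "fip S M" unfolding \<A>_def by blast+
  have "ultrafilter_on S M"
  proof (rule maximal_fip_ultrafilter[OF M(2,3)])
    fix X assume "X \<subseteq> S" "fip S (insert X M)"
    then have "insert X M \<in> \<A>" using M unfolding \<A>_def by blast
    then show "X \<in> M" using max by blast
  qed
  then show thesis using that M(1) by blast
qed

lemma ultrafilter_on_subset: "ultrafilter_on S p \<Longrightarrow> B \<in> p \<Longrightarrow> B \<subseteq> S"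
  unfolding ultrafilter_on_def by (elim conjE) (rule bspec)

lemma ultrafilter_on_carrier: "ultrafilter_on S p \<Longrightarrow> S \<in> p"
  unfolding ultrafilter_on_def by (elim conjE)

lemma ultrafilter_on_empty: "ultrafilter_on S p \<Longrightarrow> {} \<notin> p"
  unfolding ultrafilter_on_def by (elim conjE)

lemma ultrafilter_on_mono:
  assumes "ultrafilter_on S p" "B \<in> p" "B \<subseteq> C" "C \<subseteq> S"
  shows "C \<in> p"
  using assms(1) unfolding ultrafilter_on_def using assms(2-4) by (elim conjE) blast

lemma ultrafilter_on_Int:
  assumes "ultrafilter_on S p" "B \<in> p" "C \<in> p"
  shows "B \<inter> C \<in> p"
  using assms(1) unfolding ultrafilter_on_def using assms(2,3) by (elim conjE) blast

lemma ultrafilter_on_Int_iff: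
  assumes "ultrafilter_on S p" "B \<subseteq> S" "C \<subseteq> S"
  shows "B \<inter> C \<in> p \<longleftrightarrow> B \<in> p \<and> C \<in> p"
  using assms ultrafilter_on_Int[OF assms(1)] ultrafilter_on_mono[OF assms(1), of "B \<inter> C"] by blast

lemma ultrafilter_on_Diff_iff:
  assumes "ultrafilter_on S p" "B \<subseteq> S"
  shows "S - B \<in> p \<longleftrightarrow> B \<notin> p"
proof
  assume "S - B \<in> p"
  show "B \<notin> p"
  proof
    assume "B \<in> p"
    then have "(S - B) \<inter> B \<in> p" using ultrafilter_on_Int[OF assms(1) \<open>S - B \<in> p\<close>] by blast
    moreover have "(S - B) \<inter> B = {}" by blast
    ultimately show False using ultrafilter_on_empty[OF assms(1)] by simp
  qed
next
  assume "B \<notin> p"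
  moreover have "B \<in> p \<or> S - B \<in> p"
    using assms unfolding ultrafilter_on_def by (elim conjE) blast
  ultimately show "S - B \<in> p" by blast
qed

lemma ultrafilter_on_eqI:
  assumes "ultrafilter_on S p" "ultrafilter_on S q" "p \<subseteq> q"
  shows "p = q"
proof
  show "q \<subseteq> p"
  proof
    fix D assume "D \<in> q"
    then have "D \<subseteq> S" by (rule ultrafilter_on_subset[OF assms(2)])
    show "D \<in> p"
    proof (rule ccontr)
      assume "D \<notin> p"
      then have "S - D \<in> q"
        using ultrafilter_on_Diff_iff[OF assms(1) \<open>D \<subseteq> S\<close>] assms(3) by blast
      then show False using ultrafilter_on_Diff_iff[OF assms(2) \<open>D \<subseteq> S\<close>] \<open>D \<in> q\<close> by simp
    qed
  qed
qed (rule assms(3))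

lemma ultrafilter_on_Inter:
  assumes "ultrafilter_on S u" "finite G" "G \<subseteq> u"
  shows "S \<inter> \<Inter>G \<in> u"
  using assms(2,3)
proof (induction G rule: finite_induct)
  case empty then show ?case using ultrafilter_on_carrier[OF assms(1)] by simp
next
  case (insert g G)
  then have "(S \<inter> \<Inter>G) \<inter> g \<in> u" by (intro ultrafilter_on_Int[OF assms(1), of "S \<inter> \<Inter>G"]) auto
  then show ?case by (simp add: Int_ac)
qed

definition uf_shift :: "'a::plus set \<Rightarrow> 'a set set \<Rightarrow> 'a set \<Rightarrow> 'a set" where
  "uf_shift S q D = {x\<in>S. {y\<in>S. x + y \<in> D} \<in> q}"

lemma uf_plus_iff: "D \<in> uf_plus S p q \<longleftrightarrow> D \<subseteq> S \<and> uf_shift S q D \<in> p"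
  by (simp add: uf_plus_def uf_shift_def)

lemma uf_shift_subset: "uf_shift S q D \<subseteq> S"
  by (auto simp: uf_shift_def)

lemma uf_shift_mono:
  assumes "ultrafilter_on S q" "B \<subseteq> C"
  shows "uf_shift S q B \<subseteq> uf_shift S q C"
proof
  fix x assume "x \<in> uf_shift S q B"
  then have x: "x \<in> S" "{y\<in>S. x + y \<in> B} \<in> q" by (auto simp: uf_shift_def)
  have "{y\<in>S. x + y \<in> C} \<in> q"
    by (rule ultrafilter_on_mono[OF assms(1) x(2)]) (use assms(2) in auto)
  then show "x \<in> uf_shift S q C" using x(1) by (simp add: uf_shift_def)
qed

lemma uf_shift_Int:
  assumes "ultrafilter_on S q"
  shows "uf_shift S q (B \<inter> C) = uf_shift S q B \<inter> uf_shift S q C"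
proof -
  have "{y\<in>S. x + y \<in> B \<inter> C} = {y\<in>S. x + y \<in> B} \<inter> {y\<in>S. x + y \<in> C}" for x by auto
  then show ?thesis
    using ultrafilter_on_Int_iff[OF assms] by (auto simp: uf_shift_def)
qed

lemma uf_shift_carrier:
  assumes cl: "\<forall>x\<in>S. \<forall>y\<in>S. x + y \<in> S" and "ultrafilter_on S q"
  shows "uf_shift S q S = S"
proof -
  have "{y\<in>S. x + y \<in> S} = S" if "x \<in> S" for x using cl that by auto
  then show ?thesis using ultrafilter_on_carrier[OF assms(2)] by (auto simp: uf_shift_def)
qed

lemma uf_shift_Diff:
  assumes cl: "\<forall>x\<in>S. \<forall>y\<in>S. x + y \<in> S" and q: "ultrafilter_on S q"
  shows "uf_shift S q (S - B) = S - uf_shift S q B"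
proof -
  have "{y\<in>S. x + y \<in> S - B} = S - {y\<in>S. x + y \<in> B}" if "x \<in> S" for x using cl that by auto
  then show ?thesis
    using ultrafilter_on_Diff_iff[OF q, of "{y\<in>S. x + y \<in> B}" for x] by (auto simp: uf_shift_def)
qed

lemma ultrafilter_on_uf_plus:
  assumes cl: "\<forall>x\<in>S. \<forall>y\<in>S. x + y \<in> S" and p: "ultrafilter_on S p" and q: "ultrafilter_on S q"
  shows "ultrafilter_on S (uf_plus S p q)"
  unfolding ultrafilter_on_def
proof (intro conjI allI impI ballI)
  show "B \<subseteq> S" if "B \<in> uf_plus S p q" for B using that by (simp add: uf_plus_iff)
  show "S \<in> uf_plus S p q"
    using uf_shift_carrier[OF cl q] ultrafilter_on_carrier[OF p] by (simp add: uf_plus_iff)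
  have "uf_shift S q {} = {}" using ultrafilter_on_empty[OF q] by (auto simp: uf_shift_def)
  then show "{} \<notin> uf_plus S p q" using ultrafilter_on_empty[OF p] by (simp add: uf_plus_iff)
next
  fix B C assume BC: "B \<in> uf_plus S p q \<and> B \<subseteq> C \<and> C \<subseteq> S"
  then have "uf_shift S q C \<in> p"
    using ultrafilter_on_mono[OF p _ uf_shift_mono[OF q] uf_shift_subset] by (auto simp: uf_plus_iff)
  then show "C \<in> uf_plus S p q" using BC by (simp add: uf_plus_iff)
next
  fix B C assume "B \<in> uf_plus S p q \<and> C \<in> uf_plus S p q"
  then show "B \<inter> C \<in> uf_plus S p q"
    using ultrafilter_on_Int[OF p] uf_shift_Int[OF q] by (auto simp: uf_plus_iff)
next
  fix B assume B: "B \<subseteq> S"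
  have "uf_shift S q B \<in> p \<or> S - uf_shift S q B \<in> p"
    using ultrafilter_on_Diff_iff[OF p uf_shift_subset] by blast
  then show "B \<in> uf_plus S p q \<or> S - B \<in> uf_plus S p q"
    using uf_shift_Diff[OF cl q] B by (auto simp: uf_plus_iff)
qed

lemma uf_shift_uf_shift:
  fixes S :: "'a::semigroup_add set"
  assumes cl: "\<forall>x\<in>S. \<forall>y\<in>S. x + y \<in> S"
  shows "uf_shift S q (uf_shift S w D) = uf_shift S (uf_plus S q w) D"
proof -
  have "{b\<in>S. x + b \<in> uf_shift S w D} = uf_shift S w {y\<in>S. x + y \<in> D}" if "x \<in> S" for x
  proof -
    have "{c\<in>S. x + b + c \<in> D} = {c\<in>S. b + c \<in> {y\<in>S. x + y \<in> D}}" if "b \<in> S" for b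
      using cl \<open>x \<in> S\<close> that by (auto simp: add.assoc)
    then show ?thesis using cl \<open>x \<in> S\<close> by (auto simp: uf_shift_def)
  qed
  then show ?thesis
    unfolding uf_shift_def[of S q] uf_shift_def[of S "uf_plus S q w"] by (auto simp: uf_plus_iff)
qed

lemma uf_plus_assoc:
  fixes S :: "'a::semigroup_add set"
  assumes cl: "\<forall>x\<in>S. \<forall>y\<in>S. x + y \<in> S"
  shows "uf_plus S (uf_plus S p q) w = uf_plus S p (uf_plus S q w)"
  using uf_shift_uf_shift[OF cl, of q w] uf_shift_subset[of S w]
  by (auto simp: uf_plus_iff)

section \<open>Closed sets of ultrafilters and the Ellis-Numakura lemma\<close>

definition uf_kernel :: "'a set \<Rightarrow> 'a set set set \<Rightarrow> 'a set set" where
  "uf_kernel S X = {D. D \<subseteq> S \<and> (\<forall>u\<in>X. D \<in> u)}"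

text \<open>Closed subsets of the Stone-Cech compactification, described without topology: a set X of
  ultrafilters is closed iff it contains every ultrafilter extending the sets common to all of X.\<close>
definition uf_closed :: "'a set \<Rightarrow> 'a set set set \<Rightarrow> bool" where
  "uf_closed S X \<longleftrightarrow> (\<forall>u\<in>X. ultrafilter_on S u) \<and>
     (\<forall>u. ultrafilter_on S u \<longrightarrow> uf_kernel S X \<subseteq> u \<longrightarrow> u \<in> X)"

lemma uf_closedD: "uf_closed S X \<Longrightarrow> u \<in> X \<Longrightarrow> ultrafilter_on S u"
  unfolding uf_closed_def by blast

lemma uf_closed_memI: "uf_closed S X \<Longrightarrow> ultrafilter_on S u \<Longrightarrow> uf_kernel S X \<subseteq> u \<Longrightarrow> u \<in> X"
  unfolding uf_closed_def by blast

lemma uf_closed_supersets: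
  assumes "K \<subseteq> Pow S"
  shows "uf_closed S {u. ultrafilter_on S u \<and> K \<subseteq> u}"
proof -
  have "K \<subseteq> uf_kernel S {u. ultrafilter_on S u \<and> K \<subseteq> u}"
    using assms by (auto simp: uf_kernel_def)
  then show ?thesis unfolding uf_closed_def by blast
qed

lemma uf_closed_Inter:
  assumes "\<X> \<noteq> {}" "\<And>X. X \<in> \<X> \<Longrightarrow> uf_closed S X"
  shows "uf_closed S (\<Inter>\<X>)"
  unfolding uf_closed_def
proof (intro conjI allI impI ballI)
  fix u assume "u \<in> \<Inter>\<X>"
  then show "ultrafilter_on S u" using assms uf_closedD by blast
next
  fix u assume u: "ultrafilter_on S u" "uf_kernel S (\<Inter>\<X>) \<subseteq> u"
  show "u \<in> \<Inter>\<X>"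
  proof
    fix X assume X: "X \<in> \<X>"
    have "uf_kernel S X \<subseteq> uf_kernel S (\<Inter>\<X>)" using X by (auto simp: uf_kernel_def)
    then show "u \<in> X" using uf_closed_memI[OF assms(2)[OF X] u(1)] u(2) by blast
  qed
qed

lemma uf_closed_Int: "uf_closed S X \<Longrightarrow> uf_closed S Y \<Longrightarrow> uf_closed S (X \<inter> Y)"
  using uf_closed_Inter[of "{X, Y}" S] by auto

lemma uf_kernel_Inter:
  assumes "\<forall>u\<in>X. ultrafilter_on S u" "finite G" "G \<subseteq> uf_kernel S X"
  shows "S \<inter> \<Inter>G \<in> uf_kernel S X"
  using assms ultrafilter_on_Inter by (fastforce simp: uf_kernel_def)

lemma uf_closed_chain_Inter_nonempty:
  assumes "\<C> \<noteq> {}" and chain: "\<And>X Y. X \<in> \<C> \<Longrightarrow> Y \<in> \<C> \<Longrightarrow> X \<subseteq> Y \<or> Y \<subseteq> X"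
    and closed: "\<And>X. X \<in> \<C> \<Longrightarrow> uf_closed S X" and nonempty: "\<And>X. X \<in> \<C> \<Longrightarrow> X \<noteq> {}"
  shows "\<Inter>\<C> \<noteq> {}"
proof -
  define K where "K = \<Union>(uf_kernel S ` \<C>)"
  have "subset.chain UNIV (uf_kernel S ` \<C>)"
    unfolding subset_chain_def using chain by (auto simp: uf_kernel_def) blast+
  have "fip S K"
    unfolding fip_def
  proof (intro allI impI)
    fix G assume G: "finite G \<and> G \<subseteq> K"
    then obtain B where "B \<in> uf_kernel S ` \<C>" "G \<subseteq> B"
      using finite_subset_Union_chain[of G "uf_kernel S ` \<C>" UNIV] \<open>\<C> \<noteq> {}\<close>
        \<open>subset.chain UNIV (uf_kernel S ` \<C>)\<close> unfolding K_def by blast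
    then obtain X where X: "X \<in> \<C>" "G \<subseteq> uf_kernel S X" by blast
    obtain u where "u \<in> X" using nonempty[OF X(1)] by blast
    then have "ultrafilter_on S u" using closed[OF X(1)] uf_closedD by blast
    moreover have "S \<inter> \<Inter>G \<in> u"
      using uf_kernel_Inter[OF _ _ X(2)] closed[OF X(1)] G \<open>u \<in> X\<close>
      unfolding uf_closed_def uf_kernel_def by blast
    ultimately show "S \<inter> \<Inter>G \<noteq> {}" using ultrafilter_on_empty by fastforce
  qed
  moreover have "K \<subseteq> Pow S" by (auto simp: K_def uf_kernel_def)
  ultimately obtain u where u: "ultrafilter_on S u" "K \<subseteq> u" using ultrafilter_exists by blast
  have "u \<in> X" if "X \<in> \<C>" for X
    using uf_closed_memI[OF closed[OF that] u(1)] u(2) that by (auto simp: K_def)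
  then show ?thesis by blast
qed

definition downward_directed :: "'a set \<Rightarrow> 'a set set \<Rightarrow> bool" where
  "downward_directed S K \<longleftrightarrow> (\<forall>G. finite G \<and> G \<subseteq> K \<longrightarrow> (\<exists>B\<in>K. B \<subseteq> S \<inter> \<Inter>G))"

lemma fip_Un_downward_directed:
  assumes "downward_directed S K1" "downward_directed S K2" "\<forall>B1\<in>K1. \<forall>B2\<in>K2. B1 \<inter> B2 \<noteq> {}"
  shows "fip S (K1 \<union> K2)"
  unfolding fip_def
proof (intro allI impI)
  fix G assume G: "finite G \<and> G \<subseteq> K1 \<union> K2"
  have "finite (G \<inter> K1)" "finite (G \<inter> K2)" using G by auto
  then obtain B1 B2 where "B1 \<in> K1" and B1: "B1 \<subseteq> S \<inter> \<Inter>(G \<inter> K1)"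
    and "B2 \<in> K2" and B2: "B2 \<subseteq> S \<inter> \<Inter>(G \<inter> K2)"
    using assms(1,2) unfolding downward_directed_def by (meson inf_le2)
  have "S \<inter> \<Inter>(G \<inter> K1) \<inter> (S \<inter> \<Inter>(G \<inter> K2)) \<subseteq> S \<inter> \<Inter>G" using G by blast
  with Int_mono[OF B1 B2] have "B1 \<inter> B2 \<subseteq> S \<inter> \<Inter>G" by (rule order.trans)
  moreover have "B1 \<inter> B2 \<noteq> {}" using assms(3) \<open>B1 \<in> K1\<close> \<open>B2 \<in> K2\<close> by blast
  ultimately show "S \<inter> \<Inter>G \<noteq> {}" by (metis subset_empty)
qed

lemma downward_directedI:
  "(\<And>G. finite G \<Longrightarrow> G \<subseteq> K \<Longrightarrow> S \<inter> \<Inter>G \<in> K) \<Longrightarrow> downward_directed S K"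
  unfolding downward_directed_def by blast

lemma downward_directed_ultrafilter: "ultrafilter_on S u \<Longrightarrow> downward_directed S u"
  by (rule downward_directedI) (rule ultrafilter_on_Inter)

lemma downward_directed_uf_kernel:
  "\<forall>u\<in>X. ultrafilter_on S u \<Longrightarrow> downward_directed S (uf_kernel S X)"
  by (rule downward_directedI) (rule uf_kernel_Inter)

lemma downward_directed_image:
  assumes "downward_directed T K" "\<And>B C. B \<subseteq> C \<Longrightarrow> f B \<subseteq> f C" "\<And>B. f B \<subseteq> S"
  shows "downward_directed S (f ` K)"
  unfolding downward_directed_def
proof (intro allI impI)
  fix G assume "finite G \<and> G \<subseteq> f ` K"
  then obtain G' where G': "G' \<subseteq> K" "finite G'" "G = f ` G'"
    by (meson finite_subset_image)
  then obtain B where "B \<in> K" "B \<subseteq> T \<inter> \<Inter>G'"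
    using assms(1) unfolding downward_directed_def by blast
  then have "f B \<subseteq> f D" if "D \<in> G'" for D using that by (intro assms(2)) blast
  then have "f B \<subseteq> S \<inter> \<Inter>G" using G'(3) assms(3)[of B] by blast
  with \<open>B \<in> K\<close> show "\<exists>B\<in>f ` K. B \<subseteq> S \<inter> \<Inter>G" by blast
qed

text \<open>Right translation by e is continuous, so it maps the compact set X onto a closed set.\<close>
lemma uf_closed_image_plus_right:
  assumes cl: "\<forall>x\<in>S. \<forall>y\<in>S. x + y \<in> S" and e: "ultrafilter_on S e" and X: "uf_closed S X"
  shows "uf_closed S ((\<lambda>x. uf_plus S x e) ` X)"
  unfolding uf_closed_def
proof (intro conjI allI impI ballI)
  fix w assume "w \<in> (\<lambda>x. uf_plus S x e) ` X"
  then show "ultrafilter_on S w" using ultrafilter_on_uf_plus[OF cl _ e] uf_closedD[OF X] by blast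
next
  fix w assume w: "ultrafilter_on S w" "uf_kernel S ((\<lambda>x. uf_plus S x e) ` X) \<subseteq> w"
  have XU: "\<forall>x\<in>X. ultrafilter_on S x" using uf_closedD[OF X] by blast
  have meet: "E \<inter> uf_shift S e D \<noteq> {}" if "E \<in> uf_kernel S X" "D \<in> w" for E D
  proof
    assume empty: "E \<inter> uf_shift S e D = {}"
    have "D \<subseteq> S" using ultrafilter_on_subset[OF w(1) \<open>D \<in> w\<close>] .
    have "S - D \<in> uf_plus S x e" if "x \<in> X" for x
    proof -
      have x: "ultrafilter_on S x" using XU that by blast
      have "E \<in> x" using \<open>E \<in> uf_kernel S X\<close> that by (simp add: uf_kernel_def)
      have "uf_shift S e D \<notin> x"
      proof
        assume "uf_shift S e D \<in> x"
        then have "E \<inter> uf_shift S e D \<in> x" using ultrafilter_on_Int[OF x \<open>E \<in> x\<close>] by blast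
        then show False using empty ultrafilter_on_empty[OF x] by simp
      qed
      then have "uf_shift S e (S - D) \<in> x"
        using ultrafilter_on_Diff_iff[OF x uf_shift_subset] uf_shift_Diff[OF cl e] by simp
      then show ?thesis by (simp add: uf_plus_iff)
    qed
    then have "S - D \<in> w" using w(2) by (auto simp: uf_kernel_def)
    then show False using ultrafilter_on_Diff_iff[OF w(1) \<open>D \<subseteq> S\<close>] \<open>D \<in> w\<close> by simp
  qed
  have "fip S (uf_kernel S X \<union> uf_shift S e ` w)"
  proof (rule fip_Un_downward_directed)
    show "downward_directed S (uf_kernel S X)" using XU by (rule downward_directed_uf_kernel)
    show "downward_directed S (uf_shift S e ` w)"
      using downward_directed_ultrafilter[OF w(1)] uf_shift_mono[OF e] uf_shift_subset
      by (rule downward_directed_image)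
    show "\<forall>B1\<in>uf_kernel S X. \<forall>B2\<in>uf_shift S e ` w. B1 \<inter> B2 \<noteq> {}" using meet by blast
  qed
  moreover have "uf_kernel S X \<union> uf_shift S e ` w \<subseteq> Pow S"
    using uf_shift_subset by (auto simp: uf_kernel_def)
  ultimately obtain x where x: "ultrafilter_on S x" "uf_kernel S X \<union> uf_shift S e ` w \<subseteq> x"
    using ultrafilter_exists by blast
  have "x \<in> X" using uf_closed_memI[OF X x(1)] x(2) by blast
  moreover have "w \<subseteq> uf_plus S x e"
    using x(2) ultrafilter_on_subset[OF w(1)] by (auto simp: uf_plus_iff)
  then have "w = uf_plus S x e"
    using ultrafilter_on_eqI[OF w(1) ultrafilter_on_uf_plus[OF cl x(1) e]] by blast
  ultimately show "w \<in> (\<lambda>x. uf_plus S x e) ` X" by blast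
qed

lemma uf_closed_plus_right_fixed:
  assumes cl: "\<forall>x\<in>S. \<forall>y\<in>S. x + y \<in> S" and e: "ultrafilter_on S e"
  shows "uf_closed S {x. ultrafilter_on S x \<and> uf_plus S x e = e}"
proof -
  have "uf_plus S x e = e \<longleftrightarrow> uf_shift S e ` e \<subseteq> x" if x: "ultrafilter_on S x" for x
  proof
    assume "uf_plus S x e = e"
    then show "uf_shift S e ` e \<subseteq> x" by (auto simp: uf_plus_iff)
  next
    assume "uf_shift S e ` e \<subseteq> x"
    then have "e \<subseteq> uf_plus S x e" using ultrafilter_on_subset[OF e] by (auto simp: uf_plus_iff)
    then show "uf_plus S x e = e"
      using ultrafilter_on_eqI[OF e ultrafilter_on_uf_plus[OF cl x e]] by simp
  qed
  then have "{x. ultrafilter_on S x \<and> uf_plus S x e = e} = {x. ultrafilter_on S x \<and> uf_shift S e ` e \<subseteq> x}"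
    by blast
  moreover have "uf_shift S e ` e \<subseteq> Pow S" using uf_shift_subset by blast
  ultimately show ?thesis using uf_closed_supersets by simp
qed

lemma Zorn_minimal:
  assumes "\<A> \<noteq> {}"
    and chain: "\<And>\<C>. \<C> \<noteq> {} \<Longrightarrow> \<C> \<subseteq> \<A> \<Longrightarrow> (\<forall>X\<in>\<C>. \<forall>Y\<in>\<C>. X \<subseteq> Y \<or> Y \<subseteq> X) \<Longrightarrow> \<Inter>\<C> \<in> \<A>"
  shows "\<exists>M\<in>\<A>. \<forall>X\<in>\<A>. X \<subseteq> M \<longrightarrow> X = M"
proof -
  have "\<exists>M\<in>uminus ` \<A>. \<forall>X\<in>uminus ` \<A>. M \<subseteq> X \<longrightarrow> X = M"
  proof (rule subset_Zorn_nonempty)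
    show "uminus ` \<A> \<noteq> {}" using assms(1) by blast
    fix \<C> assume "\<C> \<noteq> {}" "subset.chain (uminus ` \<A>) \<C>"
    then have "uminus ` \<C> \<noteq> {}" "uminus ` \<C> \<subseteq> \<A>"
      and "\<forall>X\<in>uminus ` \<C>. \<forall>Y\<in>uminus ` \<C>. X \<subseteq> Y \<or> Y \<subseteq> X"
      by (auto simp: subset_chain_def)
    then have "\<Inter>(uminus ` \<C>) \<in> \<A>" by (rule chain)
    moreover have "\<Union>\<C> = - \<Inter>(uminus ` \<C>)" by (simp add: uminus_Inf image_image)
    ultimately show "\<Union>\<C> \<in> uminus ` \<A>" by (rule rev_image_eqI)
  qed
  then obtain M' where "M' \<in> uminus ` \<A>" and max: "\<forall>X\<in>uminus ` \<A>. M' \<subseteq> X \<longrightarrow> X = M'"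
    by blast
  then obtain M where "M \<in> \<A>" "M' = - M" by blast
  have "X = M" if "X \<in> \<A>" "X \<subseteq> M" for X
  proof -
    have "- X \<in> uminus ` \<A>" using that(1) by blast
    moreover have "M' \<subseteq> - X" using that(2) \<open>M' = - M\<close> by blast
    ultimately have "- X = M'" using max by blast
    then show ?thesis using \<open>M' = - M\<close> by simp
  qed
  with \<open>M \<in> \<A>\<close> show ?thesis by blast
qed

definition uf_closed_subsemigroup :: "'a::plus set \<Rightarrow> 'a set set set \<Rightarrow> bool" where
  "uf_closed_subsemigroup S X \<longleftrightarrow> uf_closed S X \<and> X \<noteq> {} \<and> (\<forall>x\<in>X. \<forall>y\<in>X. uf_plus S x y \<in> X)"

lemma minimal_uf_closed_subsemigroup:
  assumes "uf_closed_subsemigroup S H"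
  obtains X where "X \<subseteq> H" "uf_closed_subsemigroup S X"
    "\<And>Y. Y \<subseteq> X \<Longrightarrow> uf_closed_subsemigroup S Y \<Longrightarrow> Y = X"
proof -
  define \<Sigma> where "\<Sigma> = {X. X \<subseteq> H \<and> uf_closed_subsemigroup S X}"
  have "\<exists>M\<in>\<Sigma>. \<forall>X\<in>\<Sigma>. X \<subseteq> M \<longrightarrow> X = M"
  proof (rule Zorn_minimal)
    show "\<Sigma> \<noteq> {}" using assms unfolding \<Sigma>_def by blast
    fix \<C> assume "\<C> \<noteq> {}" "\<C> \<subseteq> \<Sigma>" and chain: "\<forall>X\<in>\<C>. \<forall>Y\<in>\<C>. X \<subseteq> Y \<or> Y \<subseteq> X"
    then have sub: "\<And>X. X \<in> \<C> \<Longrightarrow> X \<subseteq> H" and semi: "\<And>X. X \<in> \<C> \<Longrightarrow> uf_closed_subsemigroup S X"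
      unfolding \<Sigma>_def by blast+
    have "uf_closed S (\<Inter>\<C>)"
      by (rule uf_closed_Inter[OF \<open>\<C> \<noteq> {}\<close>]) (use semi in \<open>simp add: uf_closed_subsemigroup_def\<close>)
    moreover have "\<Inter>\<C> \<noteq> {}"
      by (rule uf_closed_chain_Inter_nonempty[OF \<open>\<C> \<noteq> {}\<close>])
        (use chain semi in \<open>auto simp: uf_closed_subsemigroup_def\<close>)
    moreover have "uf_plus S x y \<in> \<Inter>\<C>" if "x \<in> \<Inter>\<C>" "y \<in> \<Inter>\<C>" for x y
      using semi that unfolding uf_closed_subsemigroup_def by blast
    ultimately have "uf_closed_subsemigroup S (\<Inter>\<C>)"
      unfolding uf_closed_subsemigroup_def by blast
    moreover have "\<Inter>\<C> \<subseteq> H" using sub \<open>\<C> \<noteq> {}\<close> by blast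
    ultimately show "\<Inter>\<C> \<in> \<Sigma>" unfolding \<Sigma>_def by blast
  qed
  then obtain M where "M \<in> \<Sigma>" and min: "\<forall>X\<in>\<Sigma>. X \<subseteq> M \<longrightarrow> X = M" by blast
  show thesis
  proof (rule that)
    show "M \<subseteq> H" "uf_closed_subsemigroup S M" using \<open>M \<in> \<Sigma>\<close> unfolding \<Sigma>_def by blast+
    fix Y assume "Y \<subseteq> M" "uf_closed_subsemigroup S Y"
    then have "Y \<in> \<Sigma>" using \<open>M \<in> \<Sigma>\<close> unfolding \<Sigma>_def by blast
    then show "Y = M" using min \<open>Y \<subseteq> M\<close> by blast
  qed
qed

lemma uf_closed_subsemigroup_plus_right:
  fixes S :: "'a::semigroup_add set"
  assumes cl: "\<forall>x\<in>S. \<forall>y\<in>S. x + y \<in> S" and X: "uf_closed_subsemigroup S X" and "e \<in> X"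
  shows "uf_closed_subsemigroup S ((\<lambda>x. uf_plus S x e) ` X)"
  unfolding uf_closed_subsemigroup_def
proof (intro conjI ballI)
  have closed: "uf_closed S X" and semi: "\<forall>x\<in>X. \<forall>y\<in>X. uf_plus S x y \<in> X"
    using X unfolding uf_closed_subsemigroup_def by blast+
  show "uf_closed S ((\<lambda>x. uf_plus S x e) ` X)"
    by (rule uf_closed_image_plus_right[OF cl uf_closedD[OF closed \<open>e \<in> X\<close>] closed])
  show "(\<lambda>x. uf_plus S x e) ` X \<noteq> {}" using \<open>e \<in> X\<close> by blast
  fix a b assume "a \<in> (\<lambda>x. uf_plus S x e) ` X" "b \<in> (\<lambda>x. uf_plus S x e) ` X"
  then obtain x y where xy: "x \<in> X" "y \<in> X" "a = uf_plus S x e" "b = uf_plus S y e" by blast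
  then have "uf_plus S a b = uf_plus S (uf_plus S (uf_plus S x e) y) e"
    by (simp add: uf_plus_assoc[OF cl])
  moreover have "uf_plus S (uf_plus S x e) y \<in> X" using semi xy(1,2) \<open>e \<in> X\<close> by blast
  ultimately show "uf_plus S a b \<in> (\<lambda>x. uf_plus S x e) ` X"
    by (rule image_eqI[where f = "\<lambda>x. uf_plus S x e"])
qed

lemma uf_closed_subsemigroup_fixing:
  fixes S :: "'a::semigroup_add set"
  assumes cl: "\<forall>x\<in>S. \<forall>y\<in>S. x + y \<in> S" and X: "uf_closed_subsemigroup S X"
    and "e \<in> X" "x \<in> X" "uf_plus S x e = e"
  shows "uf_closed_subsemigroup S (X \<inter> {x. ultrafilter_on S x \<and> uf_plus S x e = e})"
  unfolding uf_closed_subsemigroup_def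
proof (intro conjI ballI)
  have closed: "uf_closed S X" and semi: "\<forall>x\<in>X. \<forall>y\<in>X. uf_plus S x y \<in> X"
    using X unfolding uf_closed_subsemigroup_def by blast+
  have e: "ultrafilter_on S e" using uf_closedD[OF closed \<open>e \<in> X\<close>] .
  show "uf_closed S (X \<inter> {x. ultrafilter_on S x \<and> uf_plus S x e = e})"
    by (rule uf_closed_Int[OF closed uf_closed_plus_right_fixed[OF cl e]])
  show "X \<inter> {x. ultrafilter_on S x \<and> uf_plus S x e = e} \<noteq> {}"
    using assms(4,5) uf_closedD[OF closed \<open>x \<in> X\<close>] by blast
  fix a b assume ab: "a \<in> X \<inter> {x. ultrafilter_on S x \<and> uf_plus S x e = e}"
    "b \<in> X \<inter> {x. ultrafilter_on S x \<and> uf_plus S x e = e}"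
  then have "uf_plus S (uf_plus S a b) e = uf_plus S a (uf_plus S b e)"
    by (simp add: uf_plus_assoc[OF cl])
  also have "\<dots> = e" using ab by simp
  finally show "uf_plus S a b \<in> X \<inter> {x. ultrafilter_on S x \<and> uf_plus S x e = e}"
    using ab semi ultrafilter_on_uf_plus[OF cl] by blast
qed

text \<open>The Ellis-Numakura lemma. For a minimal X and e \<in> X, both X + e and the set of x \<in> X with
  x + e = e are closed subsemigroups of X, hence equal to X; the second contains e.\<close>
theorem ellis_numakura:
  fixes S :: "'a::semigroup_add set"
  assumes cl: "\<forall>x\<in>S. \<forall>y\<in>S. x + y \<in> S" and H: "uf_closed_subsemigroup S H"
  shows "\<exists>e\<in>H. uf_plus S e e = e"
proof -
  obtain X where "X \<subseteq> H" and X: "uf_closed_subsemigroup S X"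
    and minimal: "\<And>Y. Y \<subseteq> X \<Longrightarrow> uf_closed_subsemigroup S Y \<Longrightarrow> Y = X"
    using minimal_uf_closed_subsemigroup[OF H] by blast
  obtain e where "e \<in> X" using X unfolding uf_closed_subsemigroup_def by blast
  have semi: "\<forall>x\<in>X. \<forall>y\<in>X. uf_plus S x y \<in> X" using X unfolding uf_closed_subsemigroup_def by blast
  have "(\<lambda>x. uf_plus S x e) ` X = X"
    by (intro minimal uf_closed_subsemigroup_plus_right[OF cl X \<open>e \<in> X\<close>]) (use semi \<open>e \<in> X\<close> in blast)
  then have "e \<in> (\<lambda>x. uf_plus S x e) ` X" using \<open>e \<in> X\<close> by simp
  then obtain x where x: "x \<in> X" "uf_plus S x e = e" by (elim imageE) simp
  have "X \<inter> {x. ultrafilter_on S x \<and> uf_plus S x e = e} = X"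
    by (intro minimal uf_closed_subsemigroup_fixing[OF cl X \<open>e \<in> X\<close> x]) blast
  then have "uf_plus S e e = e" using \<open>e \<in> X\<close> by blast
  then show ?thesis using \<open>e \<in> X\<close> \<open>X \<subseteq> H\<close> by blast
qed

section \<open>Essential CR sets\<close>

lemma not_CR_set_Union:
  assumes cl: "\<forall>x\<in>S. \<forall>y\<in>S. x + y \<in> S" and "S \<noteq> {}"
    and "finite \<D>" "\<forall>D\<in>\<D>. D \<subseteq> S \<and> \<not> CR_set S D"
  shows "\<not> CR_set S (\<Union>\<D>)"
  using assms(3,4)
proof (induction \<D> rule: finite_induct)
  case empty then show ?case using not_CR_set_empty[OF \<open>S \<noteq> {}\<close>] by simp
next
  case (insert D \<D>)
  then have "\<Union>\<D> \<subseteq> S" by blast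
  then show ?case using not_CR_set_Un[OF cl, of D "\<Union>\<D>"] insert by simp
qed

definition non_CR_complements :: "'a::comm_monoid_add set \<Rightarrow> 'a set set" where
  "non_CR_complements S = (\<lambda>D. S - D) ` {D. D \<subseteq> S \<and> \<not> CR_set S D}"

lemma beta_CR_eq: "beta_CR S = {u. ultrafilter_on S u \<and> non_CR_complements S \<subseteq> u}"
proof -
  have "(\<forall>B\<in>u. CR_set S B) \<longleftrightarrow> non_CR_complements S \<subseteq> u" if u: "ultrafilter_on S u" for u
    using ultrafilter_on_Diff_iff[OF u] ultrafilter_on_subset[OF u]
    unfolding non_CR_complements_def by blast
  then show ?thesis unfolding beta_CR_def by blast
qed

lemma beta_CR_plus:
  assumes cl: "\<forall>x\<in>S. \<forall>y\<in>S. x + y \<in> S" and "u \<in> beta_CR S" "v \<in> beta_CR S"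
  shows "uf_plus S u v \<in> beta_CR S"
proof -
  have u: "ultrafilter_on S u" and v: "ultrafilter_on S v" and vCR: "\<forall>E\<in>v. CR_set S E"
    using assms(2,3) unfolding beta_CR_def by blast+
  have "CR_set S F" if "F \<in> uf_plus S u v" for F
  proof -
    have "F \<subseteq> S" "uf_shift S v F \<in> u" using that by (simp_all add: uf_plus_iff)
    then obtain a where "a \<in> uf_shift S v F" using ultrafilter_on_empty[OF u] by fastforce
    then have "a \<in> S" and "{y\<in>S. a + y \<in> F} \<in> v" by (simp_all add: uf_shift_def)
    then show "CR_set S F"
      using CR_set_translate[OF cl \<open>a \<in> S\<close> _ \<open>F \<subseteq> S\<close>] vCR by blast
  qed
  then show ?thesis unfolding beta_CR_def using ultrafilter_on_uf_plus[OF cl u v] by blast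
qed

lemma downward_directed_non_CR_complements:
  assumes cl: "\<forall>x\<in>S. \<forall>y\<in>S. x + y \<in> S" and "S \<noteq> {}"
  shows "downward_directed S (non_CR_complements S)"
  unfolding downward_directed_def
proof (intro allI impI)
  fix G assume "finite G \<and> G \<subseteq> non_CR_complements S"
  then obtain \<D> where \<D>: "\<D> \<subseteq> {D. D \<subseteq> S \<and> \<not> CR_set S D}" "finite \<D>" "G = (\<lambda>D. S - D) ` \<D>"
    unfolding non_CR_complements_def by (meson finite_subset_image)
  then have "\<not> CR_set S (\<Union>\<D>)" "\<Union>\<D> \<subseteq> S" using not_CR_set_Union[OF cl \<open>S \<noteq> {}\<close>] by blast+
  then have "S - \<Union>\<D> \<in> non_CR_complements S" unfolding non_CR_complements_def by blast
  moreover have "S - \<Union>\<D> \<subseteq> S \<inter> \<Inter>G" using \<D>(3) by blast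
  ultimately show "\<exists>B\<in>non_CR_complements S. B \<subseteq> S \<inter> \<Inter>G" by blast
qed

text \<open>The ultrafilters of beta(CR) extending K form a closed subsemigroup; it is nonempty
  because a CR set is never covered by finitely many non-CR sets, and Ellis-Numakura gives an
  idempotent in it.\<close>
theorem essential_CR_if_downward_directed:
  fixes S :: "'a::comm_monoid_add set"
  assumes cl: "\<forall>x\<in>S. \<forall>y\<in>S. x + y \<in> S" and "S \<noteq> {}"
    and K: "K \<subseteq> Pow S" "downward_directed S K" "\<forall>B\<in>K. CR_set S B"
    and plus: "\<And>u v. ultrafilter_on S u \<Longrightarrow> ultrafilter_on S v \<Longrightarrow> K \<subseteq> u \<Longrightarrow> K \<subseteq> v \<Longrightarrow>
      K \<subseteq> uf_plus S u v"
    and "B \<in> K"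
  shows "essential_CR S B"
proof -
  define H where "H = {u. ultrafilter_on S u \<and> K \<union> non_CR_complements S \<subseteq> u}"
  have H_eq: "H = {u \<in> beta_CR S. K \<subseteq> u}" unfolding H_def beta_CR_eq by blast
  have "K \<union> non_CR_complements S \<subseteq> Pow S" using K(1) by (auto simp: non_CR_complements_def)
  then have "uf_closed S H" unfolding H_def by (rule uf_closed_supersets)
  moreover have "H \<noteq> {}"
  proof -
    have "B1 \<inter> B2 \<noteq> {}" if "B1 \<in> K" "B2 \<in> non_CR_complements S" for B1 B2
    proof
      assume "B1 \<inter> B2 = {}"
      obtain D where "D \<subseteq> S" "\<not> CR_set S D" "B2 = S - D"
        using \<open>B2 \<in> non_CR_complements S\<close> unfolding non_CR_complements_def by blast
      then have "B1 \<subseteq> D" using \<open>B1 \<inter> B2 = {}\<close> \<open>B1 \<in> K\<close> K(1) by blast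
      then show False using CR_set_mono K(3) \<open>B1 \<in> K\<close> \<open>D \<subseteq> S\<close> \<open>\<not> CR_set S D\<close> by blast
    qed
    then have "fip S (K \<union> non_CR_complements S)"
      using fip_Un_downward_directed[OF K(2) downward_directed_non_CR_complements[OF cl \<open>S \<noteq> {}\<close>]]
      by blast
    then show ?thesis
      using ultrafilter_exists[OF \<open>K \<union> non_CR_complements S \<subseteq> Pow S\<close>] unfolding H_def by blast
  qed
  moreover have "uf_plus S u v \<in> H" if "u \<in> H" "v \<in> H" for u v
    using that beta_CR_plus[OF cl] plus unfolding H_eq beta_CR_def by blast
  ultimately have "uf_closed_subsemigroup S H" unfolding uf_closed_subsemigroup_def by blast
  then obtain e where "e \<in> H" "uf_plus S e e = e" using ellis_numakura[OF cl] by blast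
  then show ?thesis using \<open>B \<in> K\<close> unfolding essential_CR_def H_eq by blast
qed

definition ap_pairs :: "nat \<Rightarrow> nat set \<Rightarrow> (nat \<times> nat) set" where
  "ap_pairs l B = {(a, b). a \<in> posnat \<and> b \<in> posnat \<and> (\<forall>k\<le>l. a + k * b \<in> B)}"

lemma posnat_pair_add_closed: "\<forall>x\<in>posnat \<times> posnat. \<forall>y\<in>posnat \<times> posnat. x + y \<in> posnat \<times> posnat"
  by (auto simp: posnat_def)

lemma ap_pairs_subset: "ap_pairs l B \<subseteq> posnat \<times> posnat"
  by (auto simp: ap_pairs_def)

lemma ap_pairs_mono: "B \<subseteq> C \<Longrightarrow> ap_pairs l B \<subseteq> ap_pairs l C"
  by (auto simp: ap_pairs_def)

text \<open>Column j of a matrix over posnat \<times> posnat becomes the l + 1 columns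
  a + k * (b + 1), k \<le> l, of a matrix over posnat; the shift by 1 makes the common difference of
  a solution at least card \<alpha>, so the translate (s, card \<alpha>) lies in posnat \<times> posnat.\<close>
definition ap_columns :: "nat \<Rightarrow> (nat \<Rightarrow> nat \<Rightarrow> nat \<times> nat) \<Rightarrow> nat \<Rightarrow> nat \<Rightarrow> nat" where
  "ap_columns l M i c =
     fst (M i (c div Suc l)) + (c mod Suc l) * (snd (M i (c div Suc l)) + 1)"

lemma ap_columns_posnat:
  assumes "\<forall>i<r. \<forall>j<n. M i j \<in> posnat \<times> posnat"
  shows "\<forall>i<r. \<forall>c<n * Suc l. ap_columns l M i c \<in> posnat"
proof (intro allI impI)
  fix i c assume "i < r" "c < n * Suc l"
  moreover have "c div Suc l < n" using \<open>c < n * Suc l\<close> by (simp add: less_mult_imp_div_less)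
  ultimately have "M i (c div Suc l) \<in> posnat \<times> posnat" using assms by blast
  then show "ap_columns l M i c \<in> posnat" by (auto simp: ap_columns_def posnat_def)
qed

lemma CR_solvable_ap_pairs:
  assumes "CR_solvable posnat B r (n * Suc l) (ap_columns l M)"
  shows "CR_solvable (posnat \<times> posnat) (ap_pairs l B) r n M"
proof -
  obtain \<alpha> s where \<alpha>: "\<alpha> \<noteq> {}" "\<alpha> \<subseteq> {..<r}" and "s \<in> posnat"
    and sol: "\<forall>c<n * Suc l. s + (\<Sum>i\<in>\<alpha>. ap_columns l M i c) \<in> B"
    using assms unfolding CR_solvable_def by blast
  have "finite \<alpha>" using \<alpha>(2) finite_subset by blast
  then have "card \<alpha> \<ge> 1" using \<alpha>(1) by (simp add: Suc_le_eq card_gt_0_iff)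
  have "(s, card \<alpha>) + (\<Sum>i\<in>\<alpha>. M i j) \<in> ap_pairs l B" if "j < n" for j
  proof -
    define X where "X = (\<Sum>i\<in>\<alpha>. fst (M i j))"
    define Y where "Y = (\<Sum>i\<in>\<alpha>. snd (M i j))"
    have sum_pair: "(\<Sum>i\<in>\<alpha>. M i j) = (X, Y)" by (simp add: prod_eq_iff fst_sum snd_sum X_def Y_def)
    have "s + X + k * (card \<alpha> + Y) \<in> B" if "k \<le> l" for k
    proof -
      define L where "L = Suc l"
      have "k < L" using that by (simp add: L_def)
      then have "j * L + k < (j + 1) * L" by simp
      also have "\<dots> \<le> n * L" using \<open>j < n\<close> by (intro mult_le_mono1) simp
      finally have "s + (\<Sum>i\<in>\<alpha>. ap_columns l M i (j * L + k)) \<in> B" using sol by (simp add: L_def)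
      moreover have "(\<Sum>i\<in>\<alpha>. ap_columns l M i (j * L + k)) = X + k * (Y + card \<alpha>)"
        using \<open>k < L\<close>
        by (simp add: ap_columns_def[of l M, folded L_def] X_def Y_def sum.distrib sum_distrib_left algebra_simps)
      ultimately show ?thesis by (simp add: add_ac)
    qed
    moreover have "s + X \<in> posnat" "card \<alpha> + Y \<in> posnat"
      using \<open>s \<in> posnat\<close> \<open>card \<alpha> \<ge> 1\<close> by (auto simp: posnat_def)
    ultimately show ?thesis by (simp add: sum_pair ap_pairs_def)
  qed
  moreover have "(s, card \<alpha>) \<in> posnat \<times> posnat"
    using \<open>s \<in> posnat\<close> \<open>card \<alpha> \<ge> 1\<close> by (simp add: posnat_def)
  ultimately show ?thesis using \<alpha> unfolding CR_solvable_def by blast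
qed

lemma CR_set_ap_pairs:
  assumes "CR_set posnat B"
  shows "CR_set (posnat \<times> posnat) (ap_pairs l B)"
  unfolding CR_set_iff
proof (intro conjI allI impI)
  show "ap_pairs l B \<subseteq> posnat \<times> posnat" by (rule ap_pairs_subset)
  fix n :: nat assume "n \<ge> 1"
  then have "n * Suc l \<ge> 1" by simp
  then obtain r where "r \<ge> 1"
    and r: "\<forall>M. (\<forall>i<r. \<forall>c<n * Suc l. M i c \<in> posnat) \<longrightarrow> CR_solvable posnat B r (n * Suc l) M"
    using assms unfolding CR_set_iff by blast
  have "CR_solvable (posnat \<times> posnat) (ap_pairs l B) r n M"
    if "\<forall>i<r. \<forall>j<n. M i j \<in> posnat \<times> posnat" for M
    using mp[OF spec[OF r, of "ap_columns l M"] ap_columns_posnat[OF that]]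
    by (rule CR_solvable_ap_pairs)
  with \<open>r \<ge> 1\<close> show "\<exists>r\<ge>1. \<forall>M. (\<forall>i<r. \<forall>j<n. M i j \<in> posnat \<times> posnat) \<longrightarrow>
      CR_solvable (posnat \<times> posnat) (ap_pairs l B) r n M"
    by blast
qed

text \<open>If (a, b) \<in> ap_pairs l B' with B' = B \<inter> uf_shift posnat p B, then every a + k * b lies in
  uf_shift posnat p B, so a set in p lies in all the -(a + k * b) + B; its ap_pairs set belongs to v
  and consists of pairs (c, d) with (a + c, b + d) \<in> ap_pairs l B.\<close>
lemma ap_pairs_plus:
  assumes p: "ultrafilter_on posnat p" "uf_plus posnat p p = p" and "B \<in> p"
    and u: "ultrafilter_on (posnat \<times> posnat) u" "ap_pairs l ` p \<subseteq> u"
    and v: "ultrafilter_on (posnat \<times> posnat) v" "ap_pairs l ` p \<subseteq> v"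
  shows "ap_pairs l B \<in> uf_plus (posnat \<times> posnat) u v"
proof -
  define B' where "B' = B \<inter> uf_shift posnat p B"
  have "B \<in> uf_plus posnat p p" using p(2) \<open>B \<in> p\<close> by simp
  then have "uf_shift posnat p B \<in> p" by (simp add: uf_plus_iff)
  then have "B' \<in> p" unfolding B'_def using ultrafilter_on_Int[OF p(1) \<open>B \<in> p\<close>] by blast
  have "ap_pairs l B' \<subseteq> uf_shift (posnat \<times> posnat) v (ap_pairs l B)"
  proof
    fix x assume "x \<in> ap_pairs l B'"
    then obtain a b where x: "x = (a, b)" "a \<in> posnat" "b \<in> posnat"
      and ab: "\<forall>k\<le>l. a + k * b \<in> B'" by (auto simp: ap_pairs_def)
    define E where "E = posnat \<inter> \<Inter>((\<lambda>k. {y\<in>posnat. a + k * b + y \<in> B}) ` {..l})"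
    have "E \<in> p"
      unfolding E_def using ab by (intro ultrafilter_on_Inter[OF p(1)]) (auto simp: B'_def uf_shift_def)
    then have "ap_pairs l E \<in> v" using v(2) by blast
    moreover have "ap_pairs l E \<subseteq> {y \<in> posnat \<times> posnat. x + y \<in> ap_pairs l B}"
    proof
      fix y assume "y \<in> ap_pairs l E"
      then obtain c d where y: "y = (c, d)" "c \<in> posnat" "d \<in> posnat"
        and cd: "\<forall>k\<le>l. c + k * d \<in> E" by (auto simp: ap_pairs_def)
      have "(a + c) + k * (b + d) \<in> B" if "k \<le> l" for k
      proof -
        have "a + k * b + (c + k * d) \<in> B" using cd that by (auto simp: E_def)
        then show ?thesis by (simp add: algebra_simps)
      qed
      then show "y \<in> {y \<in> posnat \<times> posnat. x + y \<in> ap_pairs l B}"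
        using x y by (auto simp: ap_pairs_def posnat_def)
    qed
    ultimately have "{y \<in> posnat \<times> posnat. x + y \<in> ap_pairs l B} \<in> v"
      using ultrafilter_on_mono[OF v(1)] by blast
    then show "x \<in> uf_shift (posnat \<times> posnat) v (ap_pairs l B)"
      using x by (simp add: uf_shift_def)
  qed
  moreover have "ap_pairs l B' \<in> u" using u(2) \<open>B' \<in> p\<close> by blast
  ultimately have "uf_shift (posnat \<times> posnat) v (ap_pairs l B) \<in> u"
    using ultrafilter_on_mono[OF u(1) _ _ uf_shift_subset] by blast
  then show ?thesis using ap_pairs_subset by (simp add: uf_plus_iff)
qed

theorem theorem9:
  fixes A :: "nat set" and l :: nat
  assumes "A \<subseteq> posnat"
    and "essential_CR posnat A"
    and "l \<in> posnat"
  shows "essential_CR (posnat \<times> posnat)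
           {(a, b). a \<in> posnat \<and> b \<in> posnat \<and> (\<forall>k\<le>l. a + k * b \<in> A)}"
proof -
  obtain p where "p \<in> beta_CR posnat" and idem: "uf_plus posnat p p = p" and "A \<in> p"
    using assms(2) unfolding essential_CR_def by blast
  then have p: "ultrafilter_on posnat p" and CR: "\<forall>B\<in>p. CR_set posnat B"
    unfolding beta_CR_def by blast+
  have "essential_CR (posnat \<times> posnat) (ap_pairs l A)"
  proof (rule essential_CR_if_downward_directed[where K = "ap_pairs l ` p"])
    show "\<forall>x\<in>posnat \<times> posnat. \<forall>y\<in>posnat \<times> posnat. x + y \<in> posnat \<times> posnat"
      by (rule posnat_pair_add_closed)
    show "posnat \<times> posnat \<noteq> {}" by (auto simp: posnat_def)
    show "ap_pairs l ` p \<subseteq> Pow (posnat \<times> posnat)" using ap_pairs_subset by blast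
    show "downward_directed (posnat \<times> posnat) (ap_pairs l ` p)"
      using downward_directed_ultrafilter[OF p] ap_pairs_mono ap_pairs_subset
      by (rule downward_directed_image)
    show "\<forall>B\<in>ap_pairs l ` p. CR_set (posnat \<times> posnat) B" using CR CR_set_ap_pairs by blast
    show "ap_pairs l ` p \<subseteq> uf_plus (posnat \<times> posnat) u v"
      if "ultrafilter_on (posnat \<times> posnat) u" "ultrafilter_on (posnat \<times> posnat) v"
        "ap_pairs l ` p \<subseteq> u" "ap_pairs l ` p \<subseteq> v" for u v
      using ap_pairs_plus[OF p idem _ that(1,3,2,4)] by blast
    show "ap_pairs l A \<in> ap_pairs l ` p" using \<open>A \<in> p\<close> by blast
  qed
  then show ?thesis by (simp add: ap_pairs_def)
qed

end
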